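(* If the multiply twisted product Finsler manifold $M_0\times_{f_1}M_1\times\cdots\times_{f_{\mathbf b}}M_{\mathbf b}$ has isotropic mean Berwald curvature, then it is a weakly Berwald manifold.
   Context: Let $(M_i,F_i)$, $0\le i\le\mathbf b$, be Finsler manifolds and $f_i:M_0\times M_i\to(0,\infty)$ smooth. The multiply twisted product Finsler manifold is $M=M_0\times\cdots\times M_{\mathbf b}$ with $F(v_0,\dots,v_{\mathbf b})=\sqrt{F_0^2(v_0)+\sum_{i=1}^{\mathbf b}f_i^2(\pi_0(v_0),\pi_i(v_i))F_i^2(v_i)}$ on $TM_0^0\times\cdots\times TM_{\mathbf b}^0$ ($TM_i^0=TM_i\setminus\{0\}$, $\pi_i:TM_i\to M_i$). For a Finsler manifold $(M,F)$ of dimension $n$ with local coordinates $(x^i,y^i)$ on $TM$: $g_{ij}=\frac12\frac{\partial^2F^2}{\partial y^i\partial y^j}$, $(g^{ij})$ its inverse, $G^i=\frac14g^{il}\left(\frac{\partial^2F^2}{\partial x^k\partial y^l}y^k-\frac{\partial F^2}{\partial x^l}\right)$, $B^i_{jkl}=\frac{\partial^3G^i}{\partial y^j\partial y^k\partial y^l}$, $E_{jk}=\frac12B^i_{jki}$ (summed), $y_i=g_{ij}y^j$, $h_{ij}=g_{ij}-F^{-2}y_iy_j$. $F$ is weakly Berwald if $E_{ij}=0$, and has isotropic mean Berwald curvature if $E_{ij}=\frac12(n+1)c\,F^{-1}h_{ij}$ for some scalar function $c=c(x)$ on $M$. *)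

theory Defs
  imports "HOL-Analysis.Analysis"
begin

text \<open>All coordinates of the product manifold
  M = M_0 x ... x M_b are indexed by a finite type 'n; a map blk assigns to
  every coordinate the factor it belongs to.\<close>

definition dd :: "'a::real_normed_vector \<Rightarrow> ('a \<Rightarrow> real) \<Rightarrow> 'a \<Rightarrow> real" where
  "dd v h p = deriv (\<lambda>t. h (p + t *\<^sub>R v)) 0"

fun idd :: "'a::real_normed_vector list \<Rightarrow> ('a \<Rightarrow> real) \<Rightarrow> 'a \<Rightarrow> real" where
  "idd [] h = h"
| "idd (v # vs) h = dd v (idd vs h)"

definition smooth_on :: "'a::euclidean_space set \<Rightarrow> ('a \<Rightarrow> real) \<Rightarrow> bool" where
  "smooth_on S h \<longleftrightarrow> open S \<and>
     (\<forall>vs. set vs \<subseteq> Basis \<longrightarrow> continuous_on S (idd vs h) \<and>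
        (\<forall>v\<in>Basis. \<forall>p\<in>S. (\<lambda>t. idd vs h (p + t *\<^sub>R v)) differentiable (at 0)))"

definition dy :: "'n::finite \<Rightarrow> (real^'n \<Rightarrow> real^'n \<Rightarrow> real) \<Rightarrow> real^'n \<Rightarrow> real^'n \<Rightarrow> real" where
  "dy k H x y = dd (axis k 1) (H x) y"

definition dx :: "'n::finite \<Rightarrow> (real^'n \<Rightarrow> real^'n \<Rightarrow> real) \<Rightarrow> real^'n \<Rightarrow> real^'n \<Rightarrow> real" where
  "dx k H x y = dd (axis k 1) (\<lambda>x'. H x' y) x"

definition Fsq :: "(real^'n \<Rightarrow> real^'n \<Rightarrow> real) \<Rightarrow> real^'n \<Rightarrow> real^'n \<Rightarrow> real" where
  "Fsq F x y = (F x y)\<^sup>2"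

definition fund_g :: "(real^'n \<Rightarrow> real^'n \<Rightarrow> real) \<Rightarrow> 'n::finite \<Rightarrow> 'n \<Rightarrow> real^'n \<Rightarrow> real^'n \<Rightarrow> real" where
  "fund_g F j k x y = 1/2 * dy j (dy k (Fsq F)) x y"

definition fund_ginv :: "(real^'n \<Rightarrow> real^'n \<Rightarrow> real) \<Rightarrow> real^'n \<Rightarrow> real^'n \<Rightarrow> real^'n^'n" where
  "fund_ginv F x y = matrix_inv (\<chi> j k. fund_g F j k (x::real^'n::finite) y)"

definition spray_coeff :: "(real^'n \<Rightarrow> real^'n \<Rightarrow> real) \<Rightarrow> 'n::finite \<Rightarrow> real^'n \<Rightarrow> real^'n \<Rightarrow> real" where
  "spray_coeff F i x y = 1/4 * (\<Sum>l\<in>UNIV. fund_ginv F x y $ i $ l *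
      ((\<Sum>k\<in>UNIV. dx k (dy l (Fsq F)) x y * y $ k) - dx l (Fsq F) x y))"

definition berwald_curv :: "(real^'n \<Rightarrow> real^'n \<Rightarrow> real) \<Rightarrow> 'n::finite \<Rightarrow> 'n \<Rightarrow> 'n \<Rightarrow> 'n \<Rightarrow> real^'n \<Rightarrow> real^'n \<Rightarrow> real" where
  "berwald_curv F i j k l x y = dy j (dy k (dy l (spray_coeff F i))) x y"

definition mean_berwald :: "(real^'n \<Rightarrow> real^'n \<Rightarrow> real) \<Rightarrow> 'n::finite \<Rightarrow> 'n \<Rightarrow> real^'n \<Rightarrow> real^'n \<Rightarrow> real" where
  "mean_berwald F j k x y = 1/2 * (\<Sum>i\<in>UNIV. berwald_curv F i j k i x y)"

definition ylow :: "(real^'n \<Rightarrow> real^'n \<Rightarrow> real) \<Rightarrow> 'n::finite \<Rightarrow> real^'n \<Rightarrow> real^'n \<Rightarrow> real" where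
  "ylow F i x y = (\<Sum>j\<in>UNIV. fund_g F i j x y * y $ j)"

definition angular :: "(real^'n \<Rightarrow> real^'n \<Rightarrow> real) \<Rightarrow> 'n::finite \<Rightarrow> 'n \<Rightarrow> real^'n \<Rightarrow> real^'n \<Rightarrow> real" where
  "angular F i j x y = fund_g F i j x y - ylow F i x y * ylow F j x y / (F x y)\<^sup>2"

definition weakly_berwald :: "(real^'n::finite \<Rightarrow> real^'n \<Rightarrow> real) \<Rightarrow> ((real^'n) \<times> (real^'n)) set \<Rightarrow> bool" where
  "weakly_berwald F D \<longleftrightarrow> (\<forall>(x,y)\<in>D. \<forall>j k. mean_berwald F j k x y = 0)"

definition isotropic_mean_berwald :: "(real^'n::finite \<Rightarrow> real^'n \<Rightarrow> real) \<Rightarrow> ((real^'n) \<times> (real^'n)) set \<Rightarrow> bool" where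
  "isotropic_mean_berwald F D \<longleftrightarrow> (\<exists>c :: real^'n \<Rightarrow> real. \<forall>(x,y)\<in>D. \<forall>j k.
      mean_berwald F j k x y = 1/2 * (real CARD('n) + 1) * c x / F x y * angular F j k x y)"

definition depends_only_on :: "'n::finite set \<Rightarrow> (real^'n \<Rightarrow> 'b) \<Rightarrow> bool" where
  "depends_only_on I h \<longleftrightarrow> (\<forall>x x'. (\<forall>k\<in>I. x $ k = x' $ k) \<longrightarrow> h x = h x')"

definition slit_tb :: "'n::finite set \<Rightarrow> (real^'n) set \<Rightarrow> ((real^'n) \<times> (real^'n)) set" where
  "slit_tb I U = {(x,y). x \<in> U \<and> (\<exists>k\<in>I. y $ k \<noteq> 0)}"

text \<open>A Finsler manifold, in a coordinate chart: coordinates x^k, k in I, ranging over the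
  open set U (a cylinder over I); F is smooth and positive on TM^0, positively
  homogeneous of degree 1 in y, with positive definite fundamental tensor.\<close>
definition finsler_chart :: "'n::finite set \<Rightarrow> (real^'n) set \<Rightarrow> (real^'n \<Rightarrow> real^'n \<Rightarrow> real) \<Rightarrow> bool" where
  "finsler_chart I U F \<longleftrightarrow>
     open U \<and> depends_only_on I (\<lambda>x. x \<in> U) \<and>
     (\<forall>x x' y y'. (\<forall>k\<in>I. x $ k = x' $ k \<and> y $ k = y' $ k) \<longrightarrow> F x y = F x' y') \<and>
     smooth_on (slit_tb I U) (\<lambda>(x,y). F x y) \<and>
     (\<forall>(x,y)\<in>slit_tb I U. F x y > 0) \<and>
     (\<forall>x\<in>U. \<forall>y. \<forall>s>0. F x (s *\<^sub>R y) = s * F x y) \<and>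
     (\<forall>(x,y)\<in>slit_tb I U. \<forall>w::real^'n. (\<exists>k\<in>I. w $ k \<noteq> 0) \<longrightarrow>
         (\<Sum>j\<in>I. \<Sum>k\<in>I. fund_g F j k x y * w $ j * w $ k) > 0)"

text \<open>A smooth positive function on the product of the factors with coordinate block I
  (here I = block 0 union block i), domain U.\<close>
definition twist_fun :: "'n::finite set \<Rightarrow> (real^'n) set \<Rightarrow> (real^'n \<Rightarrow> real) \<Rightarrow> bool" where
  "twist_fun I U f \<longleftrightarrow> depends_only_on I f \<and> smooth_on U f \<and> (\<forall>x\<in>U. f x > 0)"

definition mtp_finsler :: "nat \<Rightarrow> (nat \<Rightarrow> real^'n \<Rightarrow> real^'n \<Rightarrow> real) \<Rightarrow> (nat \<Rightarrow> real^'n \<Rightarrow> real) \<Rightarrow> real^'n \<Rightarrow> real^'n \<Rightarrow> real" where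
  "mtp_finsler b Fs f x y = sqrt ((Fs 0 x y)\<^sup>2 + (\<Sum>i\<in>{1..b}. (f i x)\<^sup>2 * (Fs i x y)\<^sup>2))"

text \<open>TM_0^0 x ... x TM_b^0 over M = U_0 cap ... cap U_b.\<close>
definition mtp_slit :: "('n::finite \<Rightarrow> nat) \<Rightarrow> nat \<Rightarrow> (nat \<Rightarrow> (real^'n) set) \<Rightarrow> ((real^'n) \<times> (real^'n)) set" where
  "mtp_slit blk b U = {(x,y). (\<forall>i\<le>b. x \<in> U i \<and> (\<exists>k. blk k = i \<and> y $ k \<noteq> 0))}"

end

theory Submission
  imports Defs "HOL-Computational_Algebra.Polynomial"
begin

text \<open>Let \<open>S\<^sub>c\<close>, \<open>c > 0\<close>, multiply the fibre coordinates of \<open>M\<^sub>1, \<dots>, M\<^sub>b\<close> by \<open>c\<close> and fix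
  those of \<open>M\<^sub>0\<close>. By homogeneity \<open>F\<^sup>2(x, S\<^sub>c y) = F\<^sub>0\<^sup>2(x,y) + c\<^sup>2 Q(x,y)\<close> with
  \<open>Q = \<Sum> f\<^sub>i\<^sup>2 F\<^sub>i\<^sup>2\<close>, the fundamental tensor is invariant under \<open>S\<^sub>c\<close>, and the spray
  coefficients at \<open>S\<^sub>c y\<close> are polynomial in \<open>c\<close>. Hence, for an index \<open>j\<close> of \<open>M\<^sub>0\<close>,
  \<open>c\<^sup>2 E\<^sub>j\<^sub>j(x, S\<^sub>c y)\<close> is a polynomial \<open>P(c)\<close>. Isotropy instead gives
  \<open>c\<^sup>2 E\<^sub>j\<^sub>j(x, S\<^sub>c y) = K C(x) c\<^sup>2 (\<gamma> u - \<alpha>\<^sup>2) / u\<^sup>3\<^sup>/\<^sup>2\<close> with \<open>u = s + q c\<^sup>2\<close> and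
  \<open>s, q, \<gamma>, K > 0\<close>. Squaring yields \<open>P\<^sup>2 (s + q X\<^sup>2)\<^sup>3 = K\<^sup>2 C(x)\<^sup>2 X\<^sup>4 (\<gamma> (s + q X\<^sup>2) - \<alpha>\<^sup>2)\<^sup>2\<close>;
  after cancelling \<open>X\<^sup>4\<close> the left side has degree at least 6 and the right side at most 4, so
  \<open>C(x) = 0\<close>, and then isotropy reads \<open>E = 0\<close>.\<close>

section \<open>Directional derivatives\<close>

definition diff_along :: "('a::real_normed_vector \<Rightarrow> real) \<Rightarrow> 'a \<Rightarrow> 'a \<Rightarrow> bool" where
  "diff_along h v p \<longleftrightarrow> (\<lambda>t. h (p + t *\<^sub>R v)) differentiable (at 0)"

lemma real_differentiable_iff_field: "((f::real\<Rightarrow>real) differentiable at x) \<longleftrightarrow> f field_differentiable at x"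
  by (metis DERIV_deriv_iff_real_differentiable DERIV_deriv_iff_field_differentiable)

lemma diff_along_field: "diff_along h v p \<longleftrightarrow> (\<lambda>t. h (p + t *\<^sub>R v)) field_differentiable (at 0)"
  unfolding diff_along_def real_differentiable_iff_field ..

lemma dd_add: "diff_along h v p \<Longrightarrow> diff_along k v p \<Longrightarrow> dd v (\<lambda>q. h q + k q) p = dd v h p + dd v k p"
  unfolding dd_def diff_along_field by simp

lemma dd_mult: "diff_along h v p \<Longrightarrow> diff_along k v p \<Longrightarrow> dd v (\<lambda>q. h q * k q) p = h p * dd v k p + dd v h p * k p"
  unfolding dd_def diff_along_field by simp

lemma dd_cmult: "diff_along h v p \<Longrightarrow> dd v (\<lambda>q. c * h q) p = c * dd v h p"
  unfolding dd_def diff_along_field by simp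

lemma dd_const: "dd v (\<lambda>q. c) p = 0"
  unfolding dd_def by simp

lemma dd_pow: "diff_along h v p \<Longrightarrow> dd v (\<lambda>q. h q ^ m) p = real m * dd v h p * h p ^ (m - 1)"
  unfolding dd_def diff_along_field by (simp add: deriv_pow)

lemma dd_inverse: "diff_along h v p \<Longrightarrow> h p \<noteq> 0 \<Longrightarrow> dd v (\<lambda>q. 1 / h q) p = - dd v h p / (h p)^2"
  unfolding dd_def diff_along_field using deriv_inverse[of "\<lambda>t. h (p + t *\<^sub>R v)" 0]
  by (simp add: divide_inverse)

lemma diff_along_add: "diff_along h v p \<Longrightarrow> diff_along k v p \<Longrightarrow> diff_along (\<lambda>q. h q + k q) v p"
  unfolding diff_along_field by (auto intro: derivative_intros)

lemma diff_along_mult: "diff_along h v p \<Longrightarrow> diff_along k v p \<Longrightarrow> diff_along (\<lambda>q. h q * k q) v p"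
  unfolding diff_along_field by (auto intro: derivative_intros)

lemma diff_along_const: "diff_along (\<lambda>q. c) v p"
  unfolding diff_along_field by (auto intro: derivative_intros)

lemma diff_along_pow: "diff_along h v p \<Longrightarrow> diff_along (\<lambda>q. h q ^ m) v p"
  unfolding diff_along_field by (auto intro: derivative_intros)

lemma diff_along_inverse: "diff_along h v p \<Longrightarrow> h p \<noteq> 0 \<Longrightarrow> diff_along (\<lambda>q. 1 / h q) v p"
  unfolding diff_along_field by (auto intro!: derivative_intros)

lemma eventually_line_in_open:
  fixes p v :: "'a::real_normed_vector"
  shows "open S \<Longrightarrow> p \<in> S \<Longrightarrow> eventually (\<lambda>t. p + t *\<^sub>R v \<in> S) (nhds (0::real))"
proof -
  assume a: "open S" "p \<in> S"
  have "open ((\<lambda>t::real. p + t *\<^sub>R v) -` S)"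
    by (rule open_vimage[OF a(1)]) (auto intro!: continuous_intros)
  then show ?thesis unfolding eventually_nhds using a(2) by (intro exI[of _ "(\<lambda>t::real. p + t *\<^sub>R v) -` S"]) auto
qed

lemma dd_cong: "open S \<Longrightarrow> p \<in> S \<Longrightarrow> (\<forall>q\<in>S. h q = k q) \<Longrightarrow> dd v h p = dd v k p"
  unfolding dd_def
  by (rule deriv_cong_ev[OF eventually_mono[OF eventually_line_in_open]]) auto

lemma diff_along_cong: "open S \<Longrightarrow> p \<in> S \<Longrightarrow> (\<forall>q\<in>S. h q = k q) \<Longrightarrow> diff_along h v p \<Longrightarrow> diff_along k v p"
proof -
  assume a: "open S" "p \<in> S" "\<forall>q\<in>S. h q = k q" "diff_along h v p"
  have ev: "eventually (\<lambda>t. h (p + t *\<^sub>R v) = k (p + t *\<^sub>R v)) (nhds (0::real))"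
    by (rule eventually_mono[OF eventually_line_in_open[OF a(1,2)]]) (use a(3) in auto)
  from a(4) obtain D where "((\<lambda>t. h (p + t *\<^sub>R v)) has_field_derivative D) (at 0)"
    unfolding diff_along_field field_differentiable_def by blast
  then have "((\<lambda>t. k (p + t *\<^sub>R v)) has_field_derivative D) (at 0)"
    using DERIV_cong_ev[OF refl ev refl] by simp
  then show ?thesis unfolding diff_along_field field_differentiable_def by blast
qed

section \<open>Smooth functions\<close>

definition cont_pdiff_on :: "'a::euclidean_space set \<Rightarrow> ('a \<Rightarrow> real) \<Rightarrow> bool" where
  "cont_pdiff_on S h \<longleftrightarrow> continuous_on S h \<and> (\<forall>v\<in>Basis. \<forall>p\<in>S. diff_along h v p)"

lemma smooth_on_iff: "smooth_on S h \<longleftrightarrow> open S \<and> (\<forall>vs. set vs \<subseteq> Basis \<longrightarrow> cont_pdiff_on S (idd vs h))"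
  unfolding smooth_on_def cont_pdiff_on_def diff_along_def by auto

lemma idd_append: "idd (vs @ [v]) h = idd vs (dd v h)"
  by (induction vs) auto

lemma smooth_on_dd: "smooth_on S h \<Longrightarrow> v \<in> Basis \<Longrightarrow> smooth_on S (dd v h)"
  unfolding smooth_on_iff
proof safe
  fix vs :: "'a list" assume a: "\<forall>vs. set vs \<subseteq> Basis \<longrightarrow> cont_pdiff_on S (idd vs h)" "v \<in> Basis" "set vs \<subseteq> Basis"
  then have "cont_pdiff_on S (idd (vs @ [v]) h)" by auto
  then show "cont_pdiff_on S (idd vs (dd v h))" by (simp add: idd_append)
qed

lemma smooth_on_imp_cont_pdiff_on: "smooth_on S h \<Longrightarrow> cont_pdiff_on S h"
  unfolding smooth_on_iff by (metis empty_set empty_subsetI idd.simps(1))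

lemma smooth_on_open: "smooth_on S h \<Longrightarrow> open S"
  unfolding smooth_on_iff by simp

lemma idd_cong: "open S \<Longrightarrow> \<forall>q\<in>S. h q = k q \<Longrightarrow> q \<in> S \<Longrightarrow> idd vs h q = idd vs k q"
proof (induction vs arbitrary: q)
  case Nil then show ?case by simp
next
  case (Cons v vs)
  have "dd v (idd vs h) q = dd v (idd vs k) q"
    by (rule dd_cong[OF Cons.prems(1) Cons.prems(3)]) (use Cons in auto)
  then show ?case by simp
qed

lemma cont_pdiff_on_cong: "open S \<Longrightarrow> \<forall>q\<in>S. h q = k q \<Longrightarrow> cont_pdiff_on S h \<Longrightarrow> cont_pdiff_on S k"
  unfolding cont_pdiff_on_def using continuous_on_cong diff_along_cong by metis

lemma smooth_on_cong: "\<forall>q\<in>S. h q = k q \<Longrightarrow> smooth_on S h \<Longrightarrow> smooth_on S k"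
  unfolding smooth_on_iff
proof safe
  fix vs :: "'a list" assume a: "\<forall>q\<in>S. h q = k q" "open S" "\<forall>vs. set vs \<subseteq> Basis \<longrightarrow> cont_pdiff_on S (idd vs h)" "set vs \<subseteq> Basis"
  show "cont_pdiff_on S (idd vs k)"
    by (rule cont_pdiff_on_cong[OF a(2) _ a(3)[rule_format, OF a(4)]]) (use idd_cong[OF a(2) a(1)] in auto)
qed

lemma smooth_on_if_closed_under_dd:
  assumes "open S" "\<forall>h\<in>C. cont_pdiff_on S h" "\<forall>h\<in>C. \<forall>v\<in>Basis. \<exists>h'\<in>C. \<forall>q\<in>S. dd v h q = h' q" "h \<in> C"
  shows "smooth_on S h"
proof -
  have *: "set vs \<subseteq> Basis \<Longrightarrow> (\<forall>h\<in>C. \<exists>h'\<in>C. \<forall>q\<in>S. idd vs h q = h' q)" for vs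
  proof (induction vs)
    case Nil then show ?case by auto
  next
    case (Cons v vs)
    show ?case
    proof
      fix h assume "h \<in> C"
      with Cons obtain h' where h': "h' \<in> C" "\<forall>q\<in>S. idd vs h q = h' q" by auto
      have "v \<in> Basis" using Cons.prems by simp
      then have "\<exists>h''\<in>C. \<forall>q\<in>S. dd v h' q = h'' q" using assms(3) h'(1) by blast
      then obtain h'' where h'': "h'' \<in> C" "\<forall>q\<in>S. dd v h' q = h'' q" by blast
      have "\<forall>q\<in>S. idd (v # vs) h q = h'' q"
        using dd_cong[OF assms(1) _ h'(2)] h''(2) by simp
      then show "\<exists>h'\<in>C. \<forall>q\<in>S. idd (v # vs) h q = h' q" using h'' by blast
    qed
  qed
  show ?thesis unfolding smooth_on_iff
  proof safe
    show "open S" by fact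
    fix vs :: "'a list" assume "set vs \<subseteq> Basis"
    then obtain h' where "h' \<in> C" "\<forall>q\<in>S. idd vs h q = h' q" using * assms(4) by blast
    then show "cont_pdiff_on S (idd vs h)" using cont_pdiff_on_cong[OF assms(1), of h' "idd vs h"] assms(2) by auto
  qed
qed

lemma cont_pdiff_on_add: "cont_pdiff_on S h \<Longrightarrow> cont_pdiff_on S k \<Longrightarrow> cont_pdiff_on S (\<lambda>q. h q + k q)"
  unfolding cont_pdiff_on_def by (auto intro: continuous_on_add diff_along_add)

lemma cont_pdiff_on_mult: "cont_pdiff_on S h \<Longrightarrow> cont_pdiff_on S k \<Longrightarrow> cont_pdiff_on S (\<lambda>q. h q * k q)"
  unfolding cont_pdiff_on_def by (auto intro: continuous_on_mult diff_along_mult)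

lemma cont_pdiff_on_const: "cont_pdiff_on S (\<lambda>q. c)"
  unfolding cont_pdiff_on_def by (auto intro: diff_along_const)

lemma cont_pdiff_on_pow: "cont_pdiff_on S h \<Longrightarrow> cont_pdiff_on S (\<lambda>q. h q ^ m)"
  unfolding cont_pdiff_on_def by (auto intro: continuous_on_power diff_along_pow)

lemma cont_pdiff_on_inverse: "cont_pdiff_on S h \<Longrightarrow> \<forall>q\<in>S. h q \<noteq> 0 \<Longrightarrow> cont_pdiff_on S (\<lambda>q. 1 / h q)"
  unfolding cont_pdiff_on_def by (auto intro!: continuous_on_divide continuous_on_const diff_along_inverse)

lemma smooth_on_const: "open S \<Longrightarrow> smooth_on S (\<lambda>q. c)"
  by (rule smooth_on_if_closed_under_dd[where C="range (\<lambda>c q. c)"]) (auto simp: cont_pdiff_on_const dd_const)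

text \<open>Finite sums of products of smooth functions form a class closed under partial
  differentiation; this yields smoothness of products, and likewise the polynomials in \<open>1 / h\<close>
  with smooth coefficients below yield smoothness of \<open>1 / h\<close>.\<close>

definition smooth_pairs :: "'a::euclidean_space set \<Rightarrow> (('a \<Rightarrow> real) \<times> ('a \<Rightarrow> real)) list \<Rightarrow> bool" where
  "smooth_pairs S L \<longleftrightarrow> (\<forall>(a,b)\<in>set L. smooth_on S a \<and> smooth_on S b)"

definition sum_prods :: "(('a \<Rightarrow> real) \<times> ('a \<Rightarrow> real)) list \<Rightarrow> 'a \<Rightarrow> real" where
  "sum_prods L q = sum_list (map (\<lambda>(a,b). a q * b q) L)"

lemma sum_prods_simps: "sum_prods [] q = 0" "sum_prods ((a,b) # L) q = a q * b q + sum_prods L q"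
  unfolding sum_prods_def by auto

lemma sum_prods_fun: "sum_prods [] = (\<lambda>q. 0)" "sum_prods ((a,b) # L) = (\<lambda>q. a q * b q + sum_prods L q)"
  by (auto simp: sum_prods_simps)

lemma cont_pdiff_on_sum_prods: "smooth_pairs S L \<Longrightarrow> cont_pdiff_on S (sum_prods L)"
proof (induction L)
  case Nil then show ?case by (simp add: sum_prods_simps cont_pdiff_on_const)
next
  case (Cons ab L)
  obtain a b where ab: "ab = (a,b)" by force
  have "cont_pdiff_on S (\<lambda>q. a q * b q + sum_prods L q)"
    using Cons ab by (intro cont_pdiff_on_add cont_pdiff_on_mult) (auto simp: smooth_pairs_def intro: smooth_on_imp_cont_pdiff_on)
  then show ?case using ab by (simp add: sum_prods_simps)
qed

definition dd_pairs :: "'a \<Rightarrow> (('a::euclidean_space \<Rightarrow> real) \<times> ('a \<Rightarrow> real)) list \<Rightarrow> (('a \<Rightarrow> real) \<times> ('a \<Rightarrow> real)) list" where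
  "dd_pairs v L = concat (map (\<lambda>(a,b). [(dd v a, b), (a, dd v b)]) L)"

lemma dd_pairs_simps: "dd_pairs v [] = []" "dd_pairs v ((a,b) # L) = (dd v a, b) # (a, dd v b) # dd_pairs v L"
  unfolding dd_pairs_def by auto

lemma dd_sum_prods: "smooth_pairs S L \<Longrightarrow> q \<in> S \<Longrightarrow> v \<in> Basis \<Longrightarrow> dd v (sum_prods L) q = sum_prods (dd_pairs v L) q"
proof (induction L)
  case Nil then show ?case by (simp add: sum_prods_simps dd_pairs_simps dd_const del: sum_prods_def)
next
  case (Cons ab L)
  obtain a b where ab: "ab = (a,b)" by force
  have sa: "smooth_on S a" "smooth_on S b" "smooth_pairs S L" using Cons.prems ab by (auto simp: smooth_pairs_def)
  have la: "diff_along a v q" "diff_along b v q" "diff_along (sum_prods L) v q"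
    using smooth_on_imp_cont_pdiff_on[OF sa(1)] smooth_on_imp_cont_pdiff_on[OF sa(2)] cont_pdiff_on_sum_prods[OF sa(3)] Cons.prems unfolding cont_pdiff_on_def by auto
  have "dd v (sum_prods (ab # L)) q = dd v (\<lambda>q. a q * b q + sum_prods L q) q"
    using ab by (simp add: sum_prods_fun)
  also have "\<dots> = dd v (\<lambda>q. a q * b q) q + dd v (sum_prods L) q"
    using la by (intro dd_add diff_along_mult) auto
  also have "\<dots> = sum_prods (dd_pairs v (ab # L)) q"
    using la Cons sa ab by (simp add: dd_mult dd_pairs_simps sum_prods_simps algebra_simps)
  finally show ?case .
qed

lemma smooth_pairs_dd_pairs: "smooth_pairs S L \<Longrightarrow> v \<in> Basis \<Longrightarrow> smooth_pairs S (dd_pairs v L)"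
  by (induction L) (auto simp: smooth_pairs_def dd_pairs_simps smooth_on_dd)

lemma smooth_on_sum_prods: "open S \<Longrightarrow> smooth_pairs S L \<Longrightarrow> smooth_on S (sum_prods L)"
proof (rule smooth_on_if_closed_under_dd[where C="{sum_prods L | L. smooth_pairs S L}"])
  assume "open S"
  show "\<forall>h\<in>{sum_prods L |L. smooth_pairs S L}. cont_pdiff_on S h" by (auto simp: cont_pdiff_on_sum_prods)
  show "\<forall>h\<in>{sum_prods L |L. smooth_pairs S L}. \<forall>v\<in>Basis. \<exists>h'\<in>{sum_prods L |L. smooth_pairs S L}. \<forall>q\<in>S. dd v h q = h' q"
  proof (intro ballI)
    fix h and v :: 'a assume "h \<in> {sum_prods L |L. smooth_pairs S L}" "v \<in> Basis"
    then obtain L where L: "h = sum_prods L" "smooth_pairs S L" by auto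
    show "\<exists>h'\<in>{sum_prods L |L. smooth_pairs S L}. \<forall>q\<in>S. dd v h q = h' q"
    proof (rule bexI[of _ "sum_prods (dd_pairs v L)"])
      show "\<forall>q\<in>S. dd v h q = sum_prods (dd_pairs v L) q" using L dd_sum_prods \<open>v \<in> Basis\<close> by auto
      have "smooth_pairs S (dd_pairs v L)" using L smooth_pairs_dd_pairs \<open>v \<in> Basis\<close> by auto
      then show "sum_prods (dd_pairs v L) \<in> {sum_prods L |L. smooth_pairs S L}" by blast
    qed
  qed
qed auto

lemma smooth_on_mult: "smooth_on S a \<Longrightarrow> smooth_on S b \<Longrightarrow> smooth_on S (\<lambda>q. a q * b q)"
  using smooth_on_sum_prods[of S "[(a,b)]"] smooth_on_open by (auto simp: smooth_pairs_def sum_prods_fun)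

lemma smooth_on_add: "smooth_on S a \<Longrightarrow> smooth_on S b \<Longrightarrow> smooth_on S (\<lambda>q. a q + b q)"
  using smooth_on_sum_prods[of S "[(a,\<lambda>q. 1),(b,\<lambda>q. 1)]"] smooth_on_open smooth_on_const[of S 1]
  by (auto simp: smooth_pairs_def sum_prods_fun)

lemma smooth_on_cmult: "smooth_on S a \<Longrightarrow> smooth_on S (\<lambda>q. c * a q)"
  using smooth_on_mult[OF smooth_on_const] smooth_on_open by blast

lemma smooth_on_diff: "smooth_on S a \<Longrightarrow> smooth_on S b \<Longrightarrow> smooth_on S (\<lambda>q. a q - b q)"
  using smooth_on_add[OF _ smooth_on_cmult[of S b "-1"], of a] by simp

lemma smooth_on_pow: "smooth_on S a \<Longrightarrow> smooth_on S (\<lambda>q. a q ^ m)"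
  by (induction m) (auto intro: smooth_on_mult smooth_on_const smooth_on_open)

lemma smooth_on_sum: "finite I \<Longrightarrow> open S \<Longrightarrow> \<forall>i\<in>I. smooth_on S (h i) \<Longrightarrow> smooth_on S (\<lambda>q. \<Sum>i\<in>I. h i q)"
  by (induction I rule: finite_induct) (auto intro: smooth_on_add smooth_on_const)

lemma smooth_on_prod: "finite I \<Longrightarrow> open S \<Longrightarrow> \<forall>i\<in>I. smooth_on S (h i) \<Longrightarrow> smooth_on S (\<lambda>q. \<Prod>i\<in>I. h i q)"
  by (induction I rule: finite_induct) (auto intro: smooth_on_mult smooth_on_const)

definition inv_poly :: "('a \<Rightarrow> real) \<Rightarrow> (('a \<Rightarrow> real) \<times> nat) list \<Rightarrow> 'a \<Rightarrow> real" where
  "inv_poly h L q = sum_list (map (\<lambda>(a,m). a q * (1 / h q) ^ m) L)"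

lemma inv_poly_fun: "inv_poly h [] = (\<lambda>q. 0)" "inv_poly h ((a,m) # L) = (\<lambda>q. a q * (1 / h q) ^ m + inv_poly h L q)"
  by (auto simp: inv_poly_def)

definition smooth_coeffs :: "'a::euclidean_space set \<Rightarrow> (('a \<Rightarrow> real) \<times> nat) list \<Rightarrow> bool" where
  "smooth_coeffs S L \<longleftrightarrow> (\<forall>(a,m)\<in>set L. smooth_on S a)"

definition dd_coeffs :: "'a \<Rightarrow> ('a::euclidean_space \<Rightarrow> real) \<Rightarrow> (('a \<Rightarrow> real) \<times> nat) list \<Rightarrow> (('a \<Rightarrow> real) \<times> nat) list" where
  "dd_coeffs v h L = concat (map (\<lambda>(a,m). [(dd v a, m), (\<lambda>q. - real m * a q * dd v h q, Suc m)]) L)"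

lemma dd_coeffs_simps: "dd_coeffs v h [] = []" "dd_coeffs v h ((a,m) # L) = (dd v a, m) # (\<lambda>q. - real m * a q * dd v h q, Suc m) # dd_coeffs v h L"
  unfolding dd_coeffs_def by auto

lemma cont_pdiff_on_inv_poly: "cont_pdiff_on S h \<Longrightarrow> \<forall>q\<in>S. h q \<noteq> 0 \<Longrightarrow> smooth_coeffs S L \<Longrightarrow> cont_pdiff_on S (inv_poly h L)"
proof (induction L)
  case Nil then show ?case by (simp add: inv_poly_fun cont_pdiff_on_const)
next
  case (Cons am L)
  obtain a m where am: "am = (a,m)" by force
  have "cont_pdiff_on S (\<lambda>q. a q * (1 / h q) ^ m + inv_poly h L q)"
    using Cons am by (intro cont_pdiff_on_add cont_pdiff_on_mult cont_pdiff_on_pow cont_pdiff_on_inverse) (auto simp: smooth_coeffs_def intro: smooth_on_imp_cont_pdiff_on)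
  then show ?case using am by (simp add: inv_poly_fun)
qed

lemma dd_inv_power_term:
  assumes "diff_along a v q" "diff_along h v q" "h q \<noteq> 0"
  shows "dd v (\<lambda>q. a q * (1 / h q) ^ m) q = dd v a q * (1 / h q) ^ m + (- real m * a q * dd v h q) * (1 / h q) ^ Suc m"
proof -
  have l1: "diff_along (\<lambda>q. 1 / h q) v q" using assms by (intro diff_along_inverse)
  have "dd v (\<lambda>q. a q * (1 / h q) ^ m) q = a q * dd v (\<lambda>q. (1 / h q) ^ m) q + dd v a q * (1 / h q) ^ m"
    using assms l1 by (intro dd_mult diff_along_pow) auto
  also have "dd v (\<lambda>q. (1 / h q) ^ m) q = real m * (- dd v h q / (h q)^2) * (1 / h q) ^ (m - 1)"
    using dd_pow[OF l1] dd_inverse[OF assms(2,3)] by simp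
  finally show ?thesis
    using assms(3) by (cases m) (auto simp: field_simps power2_eq_square)
qed

lemma dd_inv_poly: "smooth_on S h \<Longrightarrow> \<forall>q\<in>S. h q \<noteq> 0 \<Longrightarrow> smooth_coeffs S L \<Longrightarrow> q \<in> S \<Longrightarrow> v \<in> Basis \<Longrightarrow>
   dd v (inv_poly h L) q = inv_poly h (dd_coeffs v h L) q"
proof (induction L)
  case Nil then show ?case by (simp add: inv_poly_fun dd_coeffs_simps dd_const)
next
  case (Cons am L)
  obtain a m where am: "am = (a,m)" by force
  have sa: "smooth_on S a" "smooth_coeffs S L" using Cons.prems am by (auto simp: smooth_coeffs_def)
  have gh: "cont_pdiff_on S h" using Cons.prems smooth_on_imp_cont_pdiff_on by blast
  have la: "diff_along a v q" "diff_along h v q" "diff_along (inv_poly h L) v q"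
    using smooth_on_imp_cont_pdiff_on[OF sa(1)] gh cont_pdiff_on_inv_poly[OF gh _ sa(2)] Cons.prems unfolding cont_pdiff_on_def by auto
  have lt: "diff_along (\<lambda>q. a q * (1 / h q) ^ m) v q"
    using la Cons.prems by (intro diff_along_mult diff_along_pow diff_along_inverse) auto
  have "dd v (inv_poly h (am # L)) q = dd v (\<lambda>q. a q * (1 / h q) ^ m + inv_poly h L q) q"
    using am by (simp add: inv_poly_fun)
  also have "\<dots> = dd v (\<lambda>q. a q * (1 / h q) ^ m) q + dd v (inv_poly h L) q"
    using la lt by (intro dd_add) auto
  also have "\<dots> = inv_poly h (dd_coeffs v h (am # L)) q"
    using la Cons sa am dd_inv_power_term[OF la(1,2)] by (simp add: dd_coeffs_simps inv_poly_fun algebra_simps)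
  finally show ?case .
qed

lemma smooth_coeffs_dd_coeffs: "smooth_on S h \<Longrightarrow> smooth_coeffs S L \<Longrightarrow> v \<in> Basis \<Longrightarrow> smooth_coeffs S (dd_coeffs v h L)"
proof (induction L)
  case Nil then show ?case by (simp add: smooth_coeffs_def dd_coeffs_simps)
next
  case (Cons am L)
  obtain a m where am: "am = (a,m)" by force
  have sa: "smooth_on S a" "smooth_coeffs S L" using Cons.prems am by (auto simp: smooth_coeffs_def)
  have "smooth_on S (\<lambda>q. - real m * a q * dd v h q)"
    by (intro smooth_on_mult smooth_on_cmult smooth_on_dd sa Cons.prems)
  moreover have "smooth_on S (dd v a)" using sa Cons.prems smooth_on_dd by blast
  moreover have "smooth_coeffs S (dd_coeffs v h L)" using Cons sa by blast
  ultimately show ?case using am by (simp add: smooth_coeffs_def dd_coeffs_simps)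
qed

lemma smooth_on_inv_poly: "smooth_on S h \<Longrightarrow> \<forall>q\<in>S. h q \<noteq> 0 \<Longrightarrow> smooth_coeffs S L \<Longrightarrow> smooth_on S (inv_poly h L)"
proof (rule smooth_on_if_closed_under_dd[where C="{inv_poly h L | L. smooth_coeffs S L}"])
  assume h: "smooth_on S h" "\<forall>q\<in>S. h q \<noteq> 0"
  then show "open S" using smooth_on_open by blast
  show "\<forall>g\<in>{inv_poly h L |L. smooth_coeffs S L}. cont_pdiff_on S g" using h smooth_on_imp_cont_pdiff_on cont_pdiff_on_inv_poly by blast
  show "\<forall>g\<in>{inv_poly h L |L. smooth_coeffs S L}. \<forall>v\<in>Basis. \<exists>h'\<in>{inv_poly h L |L. smooth_coeffs S L}. \<forall>q\<in>S. dd v g q = h' q"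
  proof (intro ballI)
    fix g and v :: 'a assume "g \<in> {inv_poly h L |L. smooth_coeffs S L}" "v \<in> Basis"
    then obtain L where L: "g = inv_poly h L" "smooth_coeffs S L" by auto
    show "\<exists>h'\<in>{inv_poly h L |L. smooth_coeffs S L}. \<forall>q\<in>S. dd v g q = h' q"
    proof (rule bexI[of _ "inv_poly h (dd_coeffs v h L)"])
      show "\<forall>q\<in>S. dd v g q = inv_poly h (dd_coeffs v h L) q" using L h dd_inv_poly \<open>v \<in> Basis\<close> by auto
      have "smooth_coeffs S (dd_coeffs v h L)" by (rule smooth_coeffs_dd_coeffs[OF h(1) L(2) \<open>v \<in> Basis\<close>])
      then show "inv_poly h (dd_coeffs v h L) \<in> {inv_poly h L |L. smooth_coeffs S L}" by blast
    qed
  qed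
qed auto

lemma smooth_on_inverse: "smooth_on S h \<Longrightarrow> \<forall>q\<in>S. h q \<noteq> 0 \<Longrightarrow> smooth_on S (\<lambda>q. 1 / h q)"
  using smooth_on_inv_poly[of S h "[(\<lambda>q. 1, 1)]"] smooth_on_const[of S 1] smooth_on_open
  by (auto simp: smooth_coeffs_def inv_poly_fun)

lemma smooth_on_divide: "smooth_on S a \<Longrightarrow> smooth_on S h \<Longrightarrow> \<forall>q\<in>S. h q \<noteq> 0 \<Longrightarrow> smooth_on S (\<lambda>q. a q / h q)"
  using smooth_on_mult[OF _ smooth_on_inverse, of S a h] by (simp add: divide_inverse)

lemma idd_add:
  assumes "smooth_on S h" "smooth_on S k" "set vs \<subseteq> Basis" "p \<in> S"
  shows "idd vs (\<lambda>q. h q + k q) p = idd vs h p + idd vs k p"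
  using assms(3,4)
proof (induction vs arbitrary: p)
  case Nil then show ?case by simp
next
  case (Cons v vs)
  have S: "open S" using smooth_on_open[OF assms(1)] .
  have v: "v \<in> Basis" "set vs \<subseteq> Basis" using Cons.prems by auto
  have "idd (v # vs) (\<lambda>q. h q + k q) p = dd v (\<lambda>q. idd vs h q + idd vs k q) p"
    by simp (rule dd_cong[OF S Cons.prems(2)], use Cons v in auto)
  also have "\<dots> = dd v (idd vs h) p + dd v (idd vs k) p"
    using assms(1,2) v Cons.prems(2) unfolding smooth_on_iff cont_pdiff_on_def by (intro dd_add) blast+
  finally show ?case by simp
qed

lemma idd_cmult:
  assumes "smooth_on S h" "set vs \<subseteq> Basis" "p \<in> S"
  shows "idd vs (\<lambda>q. c * h q) p = c * idd vs h p"
  using assms(2,3)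
proof (induction vs arbitrary: p)
  case Nil then show ?case by simp
next
  case (Cons v vs)
  have S: "open S" using smooth_on_open[OF assms(1)] .
  have v: "v \<in> Basis" "set vs \<subseteq> Basis" using Cons.prems by auto
  have "idd (v # vs) (\<lambda>q. c * h q) p = dd v (\<lambda>q. c * idd vs h q) p"
    by simp (rule dd_cong[OF S Cons.prems(2)], use Cons v in auto)
  also have "\<dots> = c * dd v (idd vs h) p"
    using assms(1) v Cons.prems(2) unfolding smooth_on_iff cont_pdiff_on_def by (intro dd_cmult) blast+
  finally show ?case by simp
qed

lemma idd_diff:
  assumes "smooth_on S h" "smooth_on S k" "set vs \<subseteq> Basis" "p \<in> S"
  shows "idd vs (\<lambda>q. h q - k q) p = idd vs h p - idd vs k p"
proof -
  have "idd vs (\<lambda>q. h q + (-1) * k q) p = idd vs h p + idd vs (\<lambda>q. (-1) * k q) p"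
    by (rule idd_add[OF assms(1) smooth_on_cmult[OF assms(2)] assms(3,4)])
  then show ?thesis using idd_cmult[OF assms(2,3,4), of "-1"] by simp
qed

lemma idd_sum:
  assumes "finite T" "open S" "\<forall>t\<in>T. smooth_on S (h t)" "set vs \<subseteq> Basis" "p \<in> S"
  shows "idd vs (\<lambda>q. \<Sum>t\<in>T. h t q) p = (\<Sum>t\<in>T. idd vs (h t) p)"
  using assms(1,3)
proof (induction T rule: finite_induct)
  case empty
  then show ?case using idd_cmult[OF smooth_on_const[OF assms(2)] assms(4,5), of 0 0] by simp
next
  case (insert t T)
  then have "smooth_on S (h t)" "smooth_on S (\<lambda>q. \<Sum>t\<in>T. h t q)"
    by (auto intro: smooth_on_sum assms(2))
  with insert show ?case by (simp add: idd_add[OF _ _ assms(4,5)])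
qed

lemma idd_lincomb:
  assumes "finite T" "open S" "\<forall>t\<in>T. smooth_on S (h t)" "set vs \<subseteq> Basis" "p \<in> S"
  shows "idd vs (\<lambda>q. \<Sum>t\<in>T. c t * h t q) p = (\<Sum>t\<in>T. c t * idd vs (h t) p)"
proof -
  have "idd vs (\<lambda>q. \<Sum>t\<in>T. c t * h t q) p = (\<Sum>t\<in>T. idd vs (\<lambda>q. c t * h t q) p)"
    using assms by (intro idd_sum) (auto intro: smooth_on_cmult)
  also have "\<dots> = (\<Sum>t\<in>T. c t * idd vs (h t) p)"
    using assms by (intro sum.cong refl idd_cmult) auto
  finally show ?thesis .
qed

lemma fst_Basis_cases:
  "(w::'a::euclidean_space \<times> 'b::euclidean_space) \<in> Basis \<Longrightarrow> fst w \<in> Basis \<or> fst w = 0"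
  by (auto simp: Basis_prod_def)

lemma dd_zero: "dd 0 h = (\<lambda>p. 0)"
  by (simp add: dd_def fun_eq_iff)

lemma diff_along_zero: "diff_along h 0 p"
  by (simp add: diff_along_def)

lemma dd_fst: "dd w (\<lambda>p. k (fst p)) p = dd (fst w) k (fst p)"
  by (simp add: dd_def)

lemma diff_along_fst: "diff_along (\<lambda>p. k (fst p)) w p \<longleftrightarrow> diff_along k (fst w) (fst p)"
  by (simp add: diff_along_def)

lemma smooth_on_fst:
  fixes k :: "'a::euclidean_space \<Rightarrow> real"
  assumes "smooth_on U k"
  shows "smooth_on (U \<times> (UNIV::'b::euclidean_space set)) (\<lambda>p. k (fst p))"
proof (rule smooth_on_if_closed_under_dd[where C="{\<lambda>p::'a\<times>'b. k (fst p) | k. smooth_on U k}"])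
  show "open (U \<times> (UNIV::'b set))" using smooth_on_open[OF assms] by (simp add: open_Times)
  show "\<forall>h\<in>{\<lambda>p::'a\<times>'b. k (fst p) | k. smooth_on U k}. cont_pdiff_on (U \<times> UNIV) h"
  proof safe
    fix k assume "smooth_on U k"
    then have "continuous_on U k" "\<forall>v\<in>Basis. \<forall>p\<in>U. diff_along k v p"
      using smooth_on_imp_cont_pdiff_on unfolding cont_pdiff_on_def by blast+
    then show "cont_pdiff_on (U \<times> UNIV) (\<lambda>p. k (fst p))"
      unfolding cont_pdiff_on_def diff_along_fst
      by (auto intro!: continuous_on_compose2[of U k _ fst] continuous_intros
          dest!: fst_Basis_cases simp: diff_along_zero)
  qed
  show "\<forall>h\<in>{\<lambda>p::'a\<times>'b. k (fst p) | k. smooth_on U k}. \<forall>v\<in>Basis.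
      \<exists>h'\<in>{\<lambda>p::'a\<times>'b. k (fst p) | k. smooth_on U k}. \<forall>q\<in>U \<times> UNIV. dd v h q = h' q"
  proof safe
    fix k and w :: "'a \<times> 'b" assume "smooth_on U k" "w \<in> Basis"
    then have "smooth_on U (dd (fst w) k)"
      using fst_Basis_cases[of w] smooth_on_dd[of U k] smooth_on_const[OF smooth_on_open, of U k 0]
      by (auto simp: dd_zero)
    then show "\<exists>h'\<in>{\<lambda>p::'a\<times>'b. k (fst p) | k. smooth_on U k}.
        \<forall>q\<in>U \<times> UNIV. dd w (\<lambda>p. k (fst p)) q = h' q"
      by (auto simp: dd_fst)
  qed
qed (use assms in auto)

lemma idd_slice:
  fixes h :: "'a::euclidean_space \<times> 'b::euclidean_space \<Rightarrow> real"
  shows "idd vs (\<lambda>z. h (x,z)) = (\<lambda>z. idd (map (\<lambda>v. (0,v)) vs) h (x,z))"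
proof (induction vs)
  case Nil then show ?case by simp
next
  case (Cons v vs)
  show ?case by (rule ext) (simp add: Cons dd_def)
qed

lemma Pair_zero_Basis: "v \<in> Basis \<Longrightarrow> ((0::'a::euclidean_space), (v::'b::euclidean_space)) \<in> Basis"
  by (auto simp: Basis_prod_def)

lemma Pair_Basis_zero: "v \<in> Basis \<Longrightarrow> ((v::'a::euclidean_space), (0::'b::euclidean_space)) \<in> Basis"
  by (auto simp: Basis_prod_def)

lemma smooth_on_slice:
  fixes h :: "'a::euclidean_space \<times> 'b::euclidean_space \<Rightarrow> real"
  assumes "smooth_on S h"
  shows "smooth_on {z. (x,z) \<in> S} (\<lambda>z. h (x,z))"
  unfolding smooth_on_iff
proof (intro conjI allI impI)
  have "open (Pair x -` S)" by (rule open_vimage[OF smooth_on_open[OF assms]]) (auto intro!: continuous_intros)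
  then show "open {z. (x, z) \<in> S}" by (simp add: vimage_def)
  fix vs :: "'b list" assume vs: "set vs \<subseteq> Basis"
  have vs': "set (map (\<lambda>v. (0::'a,v)) vs) \<subseteq> Basis" using vs Pair_zero_Basis by auto
  have g: "cont_pdiff_on S (idd (map (\<lambda>v. (0::'a,v)) vs) h)" using assms vs' unfolding smooth_on_iff by blast
  show "cont_pdiff_on {z. (x, z) \<in> S} (idd vs (\<lambda>z. h (x, z)))"
    unfolding idd_slice cont_pdiff_on_def
  proof (intro conjI ballI)
    show "continuous_on {z. (x, z) \<in> S} (\<lambda>z. idd (map (Pair 0) vs) h (x, z))"
      using g unfolding cont_pdiff_on_def
      by (intro continuous_on_compose2[of S "idd (map (Pair 0) vs) h" _ "Pair x"]) (auto intro!: continuous_intros)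
    fix v z :: 'b assume "v \<in> Basis" "z \<in> {z. (x, z) \<in> S}"
    then have "diff_along (idd (map (Pair 0) vs) h) (0,v) (x,z)" using g Pair_zero_Basis unfolding cont_pdiff_on_def by auto
    then show "diff_along (\<lambda>z. idd (map (Pair 0) vs) h (x, z)) v z" unfolding diff_along_def by simp
  qed
qed

lemma smooth_on_component:
  fixes S :: "(real^'n) set"
  assumes "open S"
  shows "smooth_on S (\<lambda>z. z $ k)"
proof (rule smooth_on_if_closed_under_dd[where C="range (\<lambda>c (z::real^'n). c) \<union> {\<lambda>z. z $ k}"])
  have d: "dd v (\<lambda>z::real^'n. z $ k) p = v $ k" for v p
    unfolding dd_def by (rule DERIV_imp_deriv) (auto intro!: derivative_eq_intros)
  have l: "diff_along (\<lambda>z::real^'n. z $ k) v p" for v p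
    unfolding diff_along_def by (auto intro!: derivative_intros)
  show "\<forall>h\<in>range (\<lambda>c (z::real^'n). c) \<union> {\<lambda>z. z $ k}. cont_pdiff_on S h"
    using l by (auto simp: cont_pdiff_on_def diff_along_const intro!: continuous_intros)
  show "\<forall>h\<in>range (\<lambda>c (z::real^'n). c) \<union> {\<lambda>z. z $ k}. \<forall>v\<in>Basis. \<exists>h'\<in>range (\<lambda>c (z::real^'n). c) \<union> {\<lambda>z. z $ k}. \<forall>q\<in>S. dd v h q = h' q"
    using d by (auto simp: dd_const)
qed (use assms in auto)

definition joint :: "(real^'n \<Rightarrow> real^'n \<Rightarrow> real) \<Rightarrow> ((real^'n) \<times> (real^'n)) \<Rightarrow> real" where
  "joint H p = H (fst p) (snd p)"

lemma dy_joint: "dy k H x y = dd (0, axis k 1) (joint H) (x,y)"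
  by (simp add: dy_def dd_def joint_def)

lemma dx_joint: "dx k H x y = dd (axis k 1, 0) (joint H) (x,y)"
  by (simp add: dx_def dd_def joint_def)

lemma joint_dy: "joint (dy k H) = dd (0, axis k 1) (joint H)"
  by (rule ext) (simp add: joint_def dy_joint)

lemma joint_dx: "joint (dx k H) = dd (axis k 1, 0) (joint H)"
  by (rule ext) (simp add: joint_def dx_joint)

lemma axis_one_in_Basis: "axis k (1::real) \<in> Basis"
  by simp

lemma smooth_on_joint_dy: "smooth_on S (joint H) \<Longrightarrow> smooth_on S (joint (dy k H))"
  unfolding joint_dy by (intro smooth_on_dd Pair_zero_Basis axis_one_in_Basis)

lemma smooth_on_joint_dx: "smooth_on S (joint H) \<Longrightarrow> smooth_on S (joint (dx k H))"
  unfolding joint_dx by (intro smooth_on_dd Pair_Basis_zero axis_one_in_Basis)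

lemma smooth_on_subset: "smooth_on S h \<Longrightarrow> T \<subseteq> S \<Longrightarrow> open T \<Longrightarrow> smooth_on T h"
  unfolding smooth_on_iff cont_pdiff_on_def by (meson continuous_on_subset subsetD)

lemma smooth_on_det:
  fixes M :: "'a::euclidean_space \<Rightarrow> real^'n^'n"
  assumes "open S" "\<forall>r s. smooth_on S (\<lambda>q. M q $ r $ s)"
  shows "smooth_on S (\<lambda>q. det (M q))"
  unfolding det_def
  by (intro smooth_on_sum smooth_on_cmult smooth_on_prod finite_permutations finite_UNIV assms ballI allI) (use assms in auto)

lemma matrix_inv_right: "invertible (A::real^'n^'n) \<Longrightarrow> A ** matrix_inv A = mat 1"
  unfolding invertible_def matrix_inv_def by (rule someI2_ex) auto

lemma matrix_inv_entry_cramer: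
  fixes A :: "real^'n^'n"
  assumes "det A \<noteq> 0"
  shows "matrix_inv A $ i $ l = det (\<chi> r s. if s = i then (if r = l then 1 else 0) else A$r$s) / det A"
proof -
  have inv: "invertible A" using assms invertible_det_nz by blast
  have "A *v (matrix_inv A *v axis l 1) = axis l 1"
    by (simp add: matrix_vector_mul_assoc matrix_inv_right[OF inv])
  then have "matrix_inv A *v axis l 1 = (\<chi> k. det(\<chi> r s. if s=k then axis l 1 $ r else A$r$s) / det A)"
    using cramer[OF assms] by blast
  moreover have "(matrix_inv A *v axis l 1) $ i = matrix_inv A $ i $ l"
    by (simp add: matrix_vector_mult_def axis_def if_distrib cong: if_cong)
  moreover have ax: "\<And>r. axis l (1::real) $ r = (if r = l then 1 else 0)" by (simp add: axis_def)
  ultimately show ?thesis by (simp only: ax vec_lambda_beta)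
qed

section \<open>Functions of some of the coordinates, and block scaling\<close>

lemma depends_only_on_dd_eq_0:
  assumes "depends_only_on I H" "l \<notin> I"
  shows "dd (axis l 1) H z = 0"
proof -
  have "(\<lambda>t. H (z + t *\<^sub>R axis l 1)) = (\<lambda>t. H z)"
  proof
    fix t
    show "H (z + t *\<^sub>R axis l 1) = H z"
    proof -
      have "\<forall>k\<in>I. (z + t *\<^sub>R axis l 1) $ k = z $ k" using assms(2) by (auto simp: axis_def)
      then show ?thesis using assms(1) unfolding depends_only_on_def by blast
    qed
  qed
  then show ?thesis unfolding dd_def by simp
qed

lemma depends_only_on_dd:
  fixes I :: "'n::finite set"
  assumes "depends_only_on I H"
  shows "depends_only_on I (dd (axis l 1) H)"
  unfolding depends_only_on_def
proof (intro allI impI)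
  fix w w' :: "real^'n" assume a: "\<forall>k\<in>I. w $ k = w' $ k"
  have "(\<lambda>t. H (w + t *\<^sub>R axis l 1)) = (\<lambda>t. H (w' + t *\<^sub>R axis l 1))"
  proof
    fix t show "H (w + t *\<^sub>R axis l 1) = H (w' + t *\<^sub>R axis l 1)"
      using assms a unfolding depends_only_on_def by simp
  qed
  then show "dd (axis l 1) H w = dd (axis l 1) H w'" unfolding dd_def by simp
qed

lemma depends_only_on_dd2_eq_0:
  fixes I :: "'n::finite set"
  assumes "depends_only_on I H" "\<not> (j \<in> I \<and> k \<in> I)"
  shows "dd (axis j 1) (dd (axis k 1) H) z = 0"
proof (cases "k \<in> I")
  case True
  then have "j \<notin> I" using assms by auto
  then show ?thesis by (rule depends_only_on_dd_eq_0[OF depends_only_on_dd[OF assms(1)]])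
next
  case False
  then have "dd (axis k 1) H = (\<lambda>z. 0)" using depends_only_on_dd_eq_0[OF assms(1)] by auto
  then show ?thesis by (simp add: dd_const)
qed

definition scale_blocks :: "('n::finite \<Rightarrow> nat) \<Rightarrow> real \<Rightarrow> real^'n \<Rightarrow> real^'n" where
  "scale_blocks blk c z = (\<chi> k. if blk k = 0 then z$k else c * z$k)"

definition block_factor :: "('n::finite \<Rightarrow> nat) \<Rightarrow> real \<Rightarrow> 'n \<Rightarrow> real" where
  "block_factor blk c k = (if blk k = 0 then 1 else c)"

lemma scale_blocks_nth: "scale_blocks blk c z $ k = block_factor blk c k * z $ k"
  by (simp add: scale_blocks_def block_factor_def)

lemma scale_blocks_line: "scale_blocks blk c (z + t *\<^sub>R axis l 1) = scale_blocks blk c z + (t * block_factor blk c l) *\<^sub>R axis l 1"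
  by (simp add: vec_eq_iff scale_blocks_nth axis_def algebra_simps block_factor_def)

lemma dd_scale_blocks_base:
  assumes "blk l = 0"
  shows "dd (axis l 1) H (scale_blocks blk c z) = dd (axis l 1) (\<lambda>w. H (scale_blocks blk c w)) z"
  unfolding dd_def scale_blocks_line using assms by (simp add: block_factor_def)

lemma dd_scale_blocks_fibre:
  assumes "blk l \<noteq> 0" "c \<noteq> 0" "diff_along (\<lambda>w. H (scale_blocks blk c w)) (axis l 1) z"
  shows "dd (axis l 1) H (scale_blocks blk c z) = (1/c) * dd (axis l 1) (\<lambda>w. H (scale_blocks blk c w)) z"
proof -
  define \<phi> where "\<phi> s = H (scale_blocks blk c (z + s *\<^sub>R axis l 1))" for s
  have phi: "\<phi> s = H (scale_blocks blk c z + (s * c) *\<^sub>R axis l 1)" for s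
    unfolding \<phi>_def scale_blocks_line using assms(1) by (simp add: block_factor_def)
  have "(\<lambda>t. H (scale_blocks blk c z + t *\<^sub>R axis l 1)) = (\<lambda>t. \<phi> ((1/c) * t))"
    using assms(2) by (simp add: phi)
  moreover have "\<phi> field_differentiable at ((1/c) * 0)"
    using assms(3) unfolding diff_along_field \<phi>_def by simp
  ultimately have "dd (axis l 1) H (scale_blocks blk c z) = (1/c) * deriv \<phi> 0"
    unfolding dd_def using deriv_compose_linear[of \<phi> "1/c" 0] by simp
  then show ?thesis unfolding dd_def \<phi>_def by simp
qed

lemma dd_scale_blocks:
  assumes "c \<noteq> 0" "blk l = 0 \<or> diff_along (\<lambda>w. H (scale_blocks blk c w)) (axis l 1) z"
  shows "dd (axis l 1) H (scale_blocks blk c z) = (1 / block_factor blk c l) * dd (axis l 1) (\<lambda>w. H (scale_blocks blk c w)) z"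
  using assms dd_scale_blocks_base dd_scale_blocks_fibre by (cases "blk l = 0") (auto simp: block_factor_def)

text \<open>These exponents satisfy \<open>c\<^sup>2 / block_factor blk c i = c ^ base_deg blk i\<close> and
  \<open>block_factor blk c k = c ^ fibre_deg blk k\<close>.\<close>

definition "base_deg blk i = (if blk i = 0 then 2 else (1::nat))"
definition "fibre_deg blk k = (if blk k = 0 then 0 else (1::nat))"

lemma scaled_terms_monomials:
  fixes c :: real and a b :: "'n::finite \<Rightarrow> real"
  assumes "c \<noteq> 0"
  shows "(c\<^sup>2 / 2 * (1 / block_factor blk c i)) * ((\<Sum>k\<in>UNIV. block_factor blk c k / 4 * a k + c * block_factor blk c k / 4 * b k) - (1/4 * d + c\<^sup>2 / 4 * e))
   = (\<Sum>k\<in>UNIV. a k / 8 * c ^ (base_deg blk i + fibre_deg blk k) + b k / 8 * c ^ (base_deg blk i + fibre_deg blk k + 1)) - (d / 8 * c ^ (base_deg blk i) + e / 8 * c ^ (base_deg blk i + 2))"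
proof -
  have h: "c\<^sup>2 / 2 * (1 / block_factor blk c i) = c ^ base_deg blk i / 2" using assms
    by (auto simp: block_factor_def base_deg_def power2_eq_square)
  have t: "c ^ base_deg blk i / 2 * (block_factor blk c k / 4 * a k + c * block_factor blk c k / 4 * b k) = a k / 8 * c ^ (base_deg blk i + fibre_deg blk k) + b k / 8 * c ^ (base_deg blk i + fibre_deg blk k + 1)" for k
    by (auto simp: block_factor_def fibre_deg_def power_add field_simps)
  show ?thesis unfolding h right_diff_distrib sum_distrib_left t
    by (simp add: power_add field_simps power2_eq_square)
qed

section \<open>A polynomial identity\<close>

lemma poly_eqI_positive: "(\<forall>c::real. c > 0 \<longrightarrow> poly p c = poly q c) \<Longrightarrow> p = q"
proof (rule ccontr)
  assume a: "\<forall>c::real. c > 0 \<longrightarrow> poly p c = poly q c" "p \<noteq> q"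
  then have "finite {x. poly (p - q) x = 0}" by (intro poly_roots_finite) auto
  moreover have "{0::real<..} \<subseteq> {x. poly (p - q) x = 0}" using a(1) by auto
  ultimately show False using infinite_Ioi[of "0::real"] finite_subset by blast
qed

lemma square_divisible_by_X:
  fixes P :: "real poly"
  assumes "P\<^sup>2 * A = [:0,1:]^2 * R" "poly A 0 \<noteq> 0"
  shows "\<exists>P'. P = [:0,1:] * P' \<and> P'\<^sup>2 * A = R"
proof -
  have "poly (P\<^sup>2 * A) 0 = 0" using assms(1) by simp
  then have "poly P 0 = 0" using assms(2) by simp
  then have "[:0,1:] dvd P" using dvd_iff_poly_eq_0[of 0 P] by simp
  then obtain P' where P': "P = [:0,1:] * P'" by (auto elim: dvdE)
  have e: "[:0,1:]^2 * (P'\<^sup>2 * A) = [:0,1:]^2 * R" using assms(1) unfolding P' by (simp only: power_mult_distrib mult.assoc)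
  have nz: "([:0,1:]::real poly)^2 \<noteq> 0" by simp
  have "P'\<^sup>2 * A = R" using e mult_left_cancel[OF nz] by blast
  then show ?thesis using P' by blast
qed

lemma square_times_cube_ne_X4_times:
  fixes P A R :: "real poly"
  assumes eq: "P\<^sup>2 * A^3 = [:0,1:]^2 * ([:0,1:]^2 * R)"
    and A: "poly A 0 \<noteq> 0" "degree A = 2" and R: "R \<noteq> 0" "degree R \<le> 4"
  shows False
proof -
  have A0: "poly (A^3) 0 \<noteq> 0" using A by simp
  obtain P1 where P1: "P1\<^sup>2 * A^3 = [:0,1:]^2 * R" using square_divisible_by_X[OF eq A0] by blast
  obtain P2 where P2: "P2\<^sup>2 * A^3 = R" using square_divisible_by_X[OF P1 A0] by blast
  have "P2 \<noteq> 0" "A \<noteq> 0" using P2 R A by auto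
  then have "degree (P2\<^sup>2 * A^3) = degree (P2\<^sup>2) + 3 * degree A"
    by (simp add: degree_mult_eq degree_power_eq)
  then show False using P2 R A by simp
qed

lemma square_inv_sqrt_ratio:
  fixes u p a \<gamma> \<alpha> :: real
  assumes "u > 0" "p = a / sqrt u * (\<gamma> - \<alpha>\<^sup>2 / (sqrt u)\<^sup>2)"
  shows "p\<^sup>2 * u^3 = a\<^sup>2 * (\<gamma> * u - \<alpha>\<^sup>2)\<^sup>2"
proof -
  have "p * (u * sqrt u) = a * (\<gamma> * u - \<alpha>\<^sup>2)"
    using assms by (simp add: field_simps)
  then have "p\<^sup>2 * (u * sqrt u)\<^sup>2 = (a * (\<gamma> * u - \<alpha>\<^sup>2))\<^sup>2"
    by (metis power_mult_distrib)
  moreover have "(u * sqrt u)\<^sup>2 = u^3"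
    using assms(1) by (simp add: power_mult_distrib power3_eq_cube power2_eq_square[of u])
  ultimately show ?thesis by (simp add: power_mult_distrib)
qed

lemma poly_eq_inv_sqrt_ratio_imp_zero:
  fixes P :: "real poly" and s q \<gamma> K C \<alpha> :: real
  assumes s: "s > 0" and q: "q > 0" and g: "\<gamma> > 0" and K: "K > 0"
    and eq: "\<forall>c>0. poly P c
      = c\<^sup>2 * (K * C / sqrt (s + c\<^sup>2 * q) * (\<gamma> - \<alpha>\<^sup>2 / (sqrt (s + c\<^sup>2 * q))\<^sup>2))"
  shows "C = 0"
proof (rule ccontr)
  assume C: "C \<noteq> 0"
  define A where "A = [:s, 0, q:]"
  define B where "B = [:\<gamma> * s - \<alpha>\<^sup>2, 0, \<gamma> * q:]"
  define R where "R = smult ((K * C)\<^sup>2) (B\<^sup>2)"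
  have "poly (P\<^sup>2 * A^3) c = poly ([:0,1:]^2 * ([:0,1:]^2 * R)) c" if c: "c > 0" for c
  proof -
    have A_c: "poly A c = s + c\<^sup>2 * q" and B_c: "poly B c = \<gamma> * (s + c\<^sup>2 * q) - \<alpha>\<^sup>2"
      by (simp_all add: A_def B_def power2_eq_square algebra_simps)
    have "(poly P c)\<^sup>2 * (s + c\<^sup>2 * q)^3 = (c\<^sup>2 * K * C)\<^sup>2 * (\<gamma> * (s + c\<^sup>2 * q) - \<alpha>\<^sup>2)\<^sup>2"
      using s q eq c by (intro square_inv_sqrt_ratio) (auto simp: add_pos_nonneg mult.assoc)
    then show ?thesis
      unfolding R_def by (simp add: A_c B_c power_mult_distrib power2_eq_square mult_ac)
  qed
  then have "P\<^sup>2 * A^3 = [:0,1:]^2 * ([:0,1:]^2 * R)" by (intro poly_eqI_positive) auto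
  moreover have "poly A 0 \<noteq> 0" "degree A = 2" using s q by (simp_all add: A_def)
  moreover have "B \<noteq> 0" "degree B \<le> 2" using g q by (simp_all add: B_def)
  then have "R \<noteq> 0" "degree R \<le> 4"
    using C K degree_power_le[of B 2] by (auto simp: R_def)
  ultimately show False by (rule square_times_cube_ne_X4_times)
qed

section \<open>The multiply twisted product\<close>

locale twisted_product =
  fixes blk :: "'n::finite \<Rightarrow> nat" and b :: nat
    and U :: "nat \<Rightarrow> (real^'n) set"
    and Fs :: "nat \<Rightarrow> real^'n \<Rightarrow> real^'n \<Rightarrow> real"
    and f :: "nat \<Rightarrow> real^'n \<Rightarrow> real"
  assumes b_ge_1: "b \<ge> 1"
    and blk_le_b: "\<forall>k. blk k \<le> b"
    and blk_surj: "\<forall>i\<le>b. \<exists>k. blk k = i"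
    and factor_charts: "\<forall>i\<le>b. finsler_chart {k. blk k = i} (U i) (Fs i)"
    and twist_funs: "\<forall>i\<in>{1..b}. twist_fun ({k. blk k = 0} \<union> {k. blk k = i}) (U 0 \<inter> U i) (f i)"
begin

definition "TM0 = mtp_slit blk b U"
definition "base = (\<Inter>i\<in>{..b}. U i)"
definition "F0sq x y = (Fs 0 x y)\<^sup>2"
definition "Q x y = (\<Sum>i\<in>{1..b}. (f i x)\<^sup>2 * (Fs i x y)\<^sup>2)"
definition "F = mtp_finsler b Fs f"
definition "L x y = F0sq x y + Q x y"

abbreviation "fibre x \<equiv> {w. (x,w) \<in> TM0}"

lemma Fsq_F_eq: "Fsq F = L"
proof (intro ext)
  fix x y
  have "0 \<le> (Fs 0 x y)\<^sup>2 + (\<Sum>i\<in>{1..b}. (f i x)\<^sup>2 * (Fs i x y)\<^sup>2)"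
    by (intro add_nonneg_nonneg sum_nonneg) auto
  then show "Fsq F x y = L x y" by (simp add: Fsq_def F_def mtp_finsler_def L_def F0sq_def Q_def)
qed

lemma factor_chart: "i \<le> b \<Longrightarrow> finsler_chart {k. blk k = i} (U i) (Fs i)" using factor_charts by auto

lemma TM0_eq_Inter: "TM0 = (\<Inter>i\<in>{..b}. slit_tb {k. blk k = i} (U i))"
  unfolding TM0_def mtp_slit_def slit_tb_def by auto

lemma open_TM0: "open TM0"
  unfolding TM0_eq_Inter
  by (intro open_INT ballI finite_atMost, rule smooth_on_open) (use factor_chart in \<open>auto simp: finsler_chart_def\<close>)

lemma TM0_base: "(x,y) \<in> TM0 \<Longrightarrow> x \<in> base"
  unfolding TM0_def mtp_slit_def base_def by auto

lemma mem_TM0: "(x,y) \<in> TM0 \<longleftrightarrow> x \<in> base \<and> (\<forall>i\<le>b. \<exists>k. blk k = i \<and> y $ k \<noteq> 0)"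
  unfolding TM0_def mtp_slit_def base_def by auto

lemma smooth_Fs: "i \<le> b \<Longrightarrow> smooth_on TM0 (joint (Fs i))"
proof -
  assume i: "i \<le> b"
  have "smooth_on (slit_tb {k. blk k = i} (U i)) (\<lambda>(x,y). Fs i x y)"
    using factor_chart[OF i] by (simp add: finsler_chart_def)
  moreover have "(\<lambda>(x,y). Fs i x y) = joint (Fs i)" by (auto simp: joint_def)
  moreover have "TM0 \<subseteq> slit_tb {k. blk k = i} (U i)" unfolding TM0_eq_Inter using i by auto
  ultimately show ?thesis using smooth_on_subset open_TM0 by metis
qed

lemma smooth_twist: "i \<in> {1..b} \<Longrightarrow> smooth_on TM0 (\<lambda>p. f i (fst p))"
proof -
  assume i: "i \<in> {1..b}"
  have "smooth_on (U 0 \<inter> U i) (f i)" using twist_funs i by (simp add: twist_fun_def)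
  then have "smooth_on ((U 0 \<inter> U i) \<times> (UNIV :: (real^'n) set)) (\<lambda>p. f i (fst p))" by (rule smooth_on_fst)
  moreover have "TM0 \<subseteq> (U 0 \<inter> U i) \<times> UNIV" unfolding TM0_def mtp_slit_def using i by auto
  ultimately show ?thesis using smooth_on_subset open_TM0 by metis
qed

lemma smooth_F0sq: "smooth_on TM0 (joint F0sq)"
proof -
  have "joint F0sq = (\<lambda>p. joint (Fs 0) p ^ 2)" by (auto simp: joint_def F0sq_def)
  then show ?thesis using smooth_on_pow[OF smooth_Fs[of 0]] by simp
qed

lemma smooth_Q: "smooth_on TM0 (joint Q)"
proof -
  have "joint Q = (\<lambda>p. \<Sum>i\<in>{1..b}. (f i (fst p))\<^sup>2 * (joint (Fs i) p)\<^sup>2)" by (auto simp: joint_def Q_def)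
  moreover have "smooth_on TM0 (\<lambda>p. \<Sum>i\<in>{1..b}. (f i (fst p))\<^sup>2 * (joint (Fs i) p)\<^sup>2)"
    by (intro smooth_on_sum smooth_on_mult smooth_on_pow smooth_twist smooth_Fs open_TM0 finite_atLeastAtMost ballI) auto
  ultimately show ?thesis by simp
qed

lemma smooth_L: "smooth_on TM0 (joint L)"
proof -
  have "joint L = (\<lambda>p. joint F0sq p + joint Q p)" by (auto simp: joint_def L_def)
  then show ?thesis using smooth_on_add[OF smooth_F0sq smooth_Q] by simp
qed

lemma open_fibre: "open (fibre x)"
proof -
  have "open (Pair x -` TM0)" by (rule open_vimage[OF open_TM0]) (auto intro!: continuous_intros)
  then show ?thesis by (simp add: vimage_def)
qed

lemma open_base_slice: "open {x'. (x',z) \<in> TM0}"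
proof -
  have "open ((\<lambda>x'. (x',z)) -` TM0)" by (rule open_vimage[OF open_TM0]) (auto intro!: continuous_intros)
  then show ?thesis by (simp add: vimage_def)
qed

lemma diff_along_y: "smooth_on TM0 (joint H) \<Longrightarrow> (x,z) \<in> TM0 \<Longrightarrow> diff_along (H x) (axis j 1) z"
proof -
  assume a: "smooth_on TM0 (joint H)" "(x,z) \<in> TM0"
  have "diff_along (joint H) (0, axis j 1) (x,z)" using smooth_on_imp_cont_pdiff_on[OF a(1)] a(2) Pair_zero_Basis[OF axis_one_in_Basis] unfolding cont_pdiff_on_def by blast
  then show ?thesis unfolding diff_along_def joint_def by simp
qed

lemma diff_along_x: "smooth_on TM0 (joint H) \<Longrightarrow> (x,z) \<in> TM0 \<Longrightarrow> diff_along (\<lambda>x'. H x' z) (axis k 1) x"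
proof -
  assume a: "smooth_on TM0 (joint H)" "(x,z) \<in> TM0"
  have "diff_along (joint H) (axis k 1, 0) (x,z)" using smooth_on_imp_cont_pdiff_on[OF a(1)] a(2) Pair_Basis_zero[OF axis_one_in_Basis] unfolding cont_pdiff_on_def by blast
  then show ?thesis unfolding diff_along_def joint_def by simp
qed

lemma dy_cong_TM0: "(\<forall>w. (x,w) \<in> TM0 \<longrightarrow> H1 x w = H2 x w) \<Longrightarrow> (x,z) \<in> TM0 \<Longrightarrow> dy j H1 x z = dy j H2 x z"
  unfolding dy_def by (rule dd_cong[OF open_fibre]) auto

lemma dy_add: "smooth_on TM0 (joint H1) \<Longrightarrow> smooth_on TM0 (joint H2) \<Longrightarrow> (x,z) \<in> TM0 \<Longrightarrow>
   dy j (\<lambda>x y. H1 x y + H2 x y) x z = dy j H1 x z + dy j H2 x z"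
  unfolding dy_def using dd_add[OF diff_along_y diff_along_y] by blast

lemma dy_eq_dd: "dy l H x = dd (axis l 1) (H x)"
  by (rule ext) (simp add: dy_def)

lemma F0sq_depends_only_on_base: "depends_only_on {k. blk k = 0} (F0sq x)"
proof -
  have "finsler_chart {k. blk k = 0} (U 0) (Fs 0)" using factor_chart by auto
  then show ?thesis unfolding depends_only_on_def finsler_chart_def F0sq_def by metis
qed

lemma Fs_depends_only_on_block: "i \<le> b \<Longrightarrow> depends_only_on {k. blk k = i} (Fs i x)"
proof -
  assume "i \<le> b"
  then have "finsler_chart {k. blk k = i} (U i) (Fs i)" using factor_chart by auto
  then show ?thesis unfolding depends_only_on_def finsler_chart_def by metis
qed

lemma Q_depends_only_on_fibre: "depends_only_on {k. blk k \<noteq> 0} (Q x)"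
  unfolding depends_only_on_def
proof (intro allI impI)
  fix w w' :: "real^'n" assume a: "\<forall>k\<in>{k. blk k \<noteq> 0}. w $ k = w' $ k"
  have "Fs i x w = Fs i x w'" if "i \<in> {1..b}" for i
    using Fs_depends_only_on_block[of i x] that a unfolding depends_only_on_def by auto
  then show "Q x w = Q x w'" unfolding Q_def by simp
qed

lemma Fs_scale_blocks: "i \<in> {1..b} \<Longrightarrow> x \<in> U i \<Longrightarrow> c > 0 \<Longrightarrow> Fs i x (scale_blocks blk c w) = c * Fs i x w"
proof -
  assume a: "i \<in> {1..b}" "x \<in> U i" "c > 0"
  have fi: "finsler_chart {k. blk k = i} (U i) (Fs i)" using factor_chart a by auto
  have "Fs i x (scale_blocks blk c w) = Fs i x (c *\<^sub>R w)"
    using Fs_depends_only_on_block[of i x] a unfolding depends_only_on_def by (auto simp: scale_blocks_nth block_factor_def)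
  also have "\<dots> = c * Fs i x w" using fi a unfolding finsler_chart_def by blast
  finally show ?thesis .
qed

lemma F0sq_scale_blocks: "F0sq x (scale_blocks blk c w) = F0sq x w"
  using F0sq_depends_only_on_base[of x] unfolding depends_only_on_def by (auto simp: scale_blocks_nth block_factor_def)

lemma Q_scale_blocks: "x \<in> base \<Longrightarrow> c > 0 \<Longrightarrow> Q x (scale_blocks blk c w) = c\<^sup>2 * Q x w"
proof -
  assume a: "x \<in> base" "c > 0"
  have "x \<in> U i" if "i \<in> {1..b}" for i using a that unfolding base_def by auto
  then show ?thesis using a unfolding Q_def
    by (simp add: Fs_scale_blocks sum_distrib_left power_mult_distrib algebra_simps)
qed

lemma scale_blocks_TM0: "(x,z) \<in> TM0 \<Longrightarrow> c > 0 \<Longrightarrow> (x, scale_blocks blk c z) \<in> TM0"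
  unfolding mem_TM0 by (auto simp: scale_blocks_nth block_factor_def)

lemma dy_F0sq_fibre: "blk l \<noteq> 0 \<Longrightarrow> dy l F0sq x z = 0"
  unfolding dy_def by (rule depends_only_on_dd_eq_0[OF F0sq_depends_only_on_base]) auto

lemma dy_Q_base: "blk l = 0 \<Longrightarrow> dy l Q x z = 0"
  unfolding dy_def by (rule depends_only_on_dd_eq_0[OF Q_depends_only_on_fibre]) auto

lemma ddy_F0sq_eq_0: "\<not> (blk j = 0 \<and> blk k = 0) \<Longrightarrow> dy j (dy k F0sq) x z = 0"
proof (cases "blk k = 0")
  case True
  assume "\<not> (blk j = 0 \<and> blk k = 0)"
  then have "blk j \<noteq> 0" using True by simp
  moreover have "depends_only_on {k. blk k = 0} (dy k F0sq x)" unfolding dy_eq_dd by (rule depends_only_on_dd[OF F0sq_depends_only_on_base])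
  ultimately show ?thesis unfolding dy_def[of j] by (intro depends_only_on_dd_eq_0) auto
next
  case False
  then have "dy k F0sq = (\<lambda>x z. 0)" using dy_F0sq_fibre by (intro ext) auto
  then show ?thesis by (simp add: dy_def dd_const)
qed

lemma ddy_Q_eq_0: "\<not> (blk j \<noteq> 0 \<and> blk k \<noteq> 0) \<Longrightarrow> dy j (dy k Q) x z = 0"
proof (cases "blk k \<noteq> 0")
  case True
  assume "\<not> (blk j \<noteq> 0 \<and> blk k \<noteq> 0)"
  then have "blk j = 0" using True by simp
  moreover have "depends_only_on {k. blk k \<noteq> 0} (dy k Q x)" unfolding dy_eq_dd by (rule depends_only_on_dd[OF Q_depends_only_on_fibre])
  ultimately show ?thesis unfolding dy_def[of j] by (intro depends_only_on_dd_eq_0) auto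
next
  case False
  then have "dy k Q = (\<lambda>x z. 0)" using dy_Q_base by (intro ext) auto
  then show ?thesis by (simp add: dy_def dd_const)
qed

lemma dy_F0sq_scale_blocks: "dy l F0sq x (scale_blocks blk c z) = dy l F0sq x z"
proof (cases "blk l = 0")
  case True
  then show ?thesis unfolding dy_def dd_scale_blocks_base[where blk=blk and l=l, OF True] F0sq_scale_blocks by simp
qed (simp add: dy_F0sq_fibre)

lemma ddy_F0sq_scale_blocks: "dy j (dy k F0sq) x (scale_blocks blk c z) = dy j (dy k F0sq) x z"
proof (cases "blk j = 0")
  case True
  have "dy j (dy k F0sq) x (scale_blocks blk c z) = dd (axis j 1) (\<lambda>w. dy k F0sq x (scale_blocks blk c w)) z"
    unfolding dy_def[of j] dd_scale_blocks_base[where blk=blk and l=j, OF True] ..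
  then show ?thesis by (simp add: dy_F0sq_scale_blocks dy_def[of j])
qed (simp add: ddy_F0sq_eq_0)

lemma smooth_dy_Q: "smooth_on TM0 (joint (dy k Q))" by (intro smooth_on_joint_dy smooth_Q)
lemma smooth_dy_F0sq: "smooth_on TM0 (joint (dy k F0sq))" by (intro smooth_on_joint_dy smooth_F0sq)

lemma dy_Q_scale_blocks:
  assumes "(x,z) \<in> TM0" "c > 0"
  shows "dy l Q x (scale_blocks blk c z) = c * dy l Q x z"
proof (cases "blk l = 0")
  case False
  have xu: "x \<in> base" using TM0_base assms by blast
  have fe: "(\<lambda>w. Q x (scale_blocks blk c w)) = (\<lambda>w. c\<^sup>2 * Q x w)" using Q_scale_blocks[OF xu assms(2)] by auto
  have l: "diff_along (Q x) (axis l 1) z" using diff_along_y[OF smooth_Q assms(1)] .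
  have "dy l Q x (scale_blocks blk c z) = (1/c) * dd (axis l 1) (\<lambda>w. Q x (scale_blocks blk c w)) z"
    unfolding dy_def using assms False l by (intro dd_scale_blocks_fibre) (auto simp: fe intro: diff_along_mult diff_along_const)
  also have "\<dots> = c * dy l Q x z" using assms l unfolding fe dy_def
    by (simp add: dd_cmult power2_eq_square)
  finally show ?thesis .
qed (simp add: dy_Q_base)

lemma ddy_Q_scale_blocks:
  assumes "(x,z) \<in> TM0" "c > 0"
  shows "dy j (dy k Q) x (scale_blocks blk c z) = dy j (dy k Q) x z"
proof (cases "blk j = 0")
  case False
  have eq': "\<forall>w\<in>fibre x. c * dy k Q x w = dy k Q x (scale_blocks blk c w)"
    using dy_Q_scale_blocks assms by auto
  have l: "diff_along (dy k Q x) (axis j 1) z" using diff_along_y[OF smooth_dy_Q assms(1)] .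
  have l2: "diff_along (\<lambda>w. dy k Q x (scale_blocks blk c w)) (axis j 1) z"
    by (rule diff_along_cong[OF open_fibre _ eq']) (use assms l in \<open>auto intro: diff_along_mult diff_along_const\<close>)
  have "dy j (dy k Q) x (scale_blocks blk c z) = (1/c) * dd (axis j 1) (\<lambda>w. dy k Q x (scale_blocks blk c w)) z"
    unfolding dy_def[of j] by (rule dd_scale_blocks_fibre) (use False assms l2 in auto)
  also have "dd (axis j 1) (\<lambda>w. dy k Q x (scale_blocks blk c w)) z = dd (axis j 1) (\<lambda>w. c * dy k Q x w) z"
    by (rule dd_cong[OF open_fibre]) (use assms eq' in auto)
  also have "\<dots> = c * dy j (dy k Q) x z" using l by (simp add: dd_cmult dy_def[of j])
  finally show ?thesis using assms by simp
qed (simp add: ddy_Q_eq_0)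

lemma L_eq: "L = (\<lambda>x y. F0sq x y + Q x y)"
  by (intro ext) (simp add: L_def)

lemma dy_L: "(x,z) \<in> TM0 \<Longrightarrow> dy k L x z = dy k F0sq x z + dy k Q x z"
  unfolding L_eq by (rule dy_add[OF smooth_F0sq smooth_Q])

lemma fund_g_F_split: "(x,z) \<in> TM0 \<Longrightarrow> fund_g F j k x z = 1/2 * (dy j (dy k F0sq) x z + dy j (dy k Q) x z)"
proof -
  assume a: "(x,z) \<in> TM0"
  have "dy j (dy k L) x z = dy j (\<lambda>x y. dy k F0sq x y + dy k Q x y) x z"
    by (rule dy_cong_TM0) (use dy_L a in auto)
  also have "\<dots> = dy j (dy k F0sq) x z + dy j (dy k Q) x z"
    by (rule dy_add[OF smooth_dy_F0sq smooth_dy_Q a])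
  finally show ?thesis unfolding fund_g_def Fsq_F_eq by simp
qed

lemma fund_g_scale_blocks: "(x,z) \<in> TM0 \<Longrightarrow> c > 0 \<Longrightarrow> fund_g F j k x (scale_blocks blk c z) = fund_g F j k x z"
proof -
  assume a: "(x,z) \<in> TM0" "c > 0"
  show ?thesis unfolding fund_g_F_split[OF a(1), of j k] fund_g_F_split[OF scale_blocks_TM0[OF a], of j k] ddy_F0sq_scale_blocks ddy_Q_scale_blocks[OF a] ..
qed

lemma fund_g_F_mixed: "blk j = 0 \<Longrightarrow> blk k \<noteq> 0 \<Longrightarrow> (x,z) \<in> TM0 \<Longrightarrow> fund_g F j k x z = 0"
proof -
  assume a: "blk j = 0" "blk k \<noteq> 0" "(x,z) \<in> TM0"
  show ?thesis using ddy_F0sq_eq_0[of j k x z] ddy_Q_eq_0[of j k x z] a by (simp add: fund_g_F_split[OF a(3)])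
qed

definition "weight i x = (if i = 0 then 1 else (f i x)\<^sup>2)"

lemma Fsq_Fs_depends_only_on_block: "i \<le> b \<Longrightarrow> depends_only_on {k. blk k = i} (Fsq (Fs i) x)"
  using Fs_depends_only_on_block[of i x] unfolding depends_only_on_def Fsq_def by metis

lemma smooth_Fsq_Fs: "i \<le> b \<Longrightarrow> smooth_on TM0 (joint (Fsq (Fs i)))"
proof -
  assume i: "i \<le> b"
  have "joint (Fsq (Fs i)) = (\<lambda>p. joint (Fs i) p ^ 2)" by (auto simp: joint_def Fsq_def)
  then show ?thesis using smooth_on_pow[OF smooth_Fs[OF i]] by simp
qed

lemma ddy_eq_idd: "dy j (dy k H) x z = idd [axis j 1, axis k 1] (H x) z"
  by (simp add: dy_def dy_eq_dd)

lemma Q_eq_sum: "Q x = (\<lambda>y. \<Sum>i\<in>{1..b}. (f i x)\<^sup>2 * Fsq (Fs i) x y)"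
  by (auto simp: Q_def Fsq_def)

lemma ddy_Q_sum: "(x,z) \<in> TM0 \<Longrightarrow> dy j (dy k Q) x z = (\<Sum>i\<in>{1..b}. (f i x)\<^sup>2 * dy j (dy k (Fsq (Fs i))) x z)"
proof -
  assume a: "(x,z) \<in> TM0"
  have "\<forall>i\<in>{1..b}. smooth_on (fibre x) (\<lambda>w. Fsq (Fs i) x w)"
  proof
    fix i assume "i \<in> {1..b}"
    then have "smooth_on TM0 (joint (Fsq (Fs i)))" by (intro smooth_Fsq_Fs) auto
    from smooth_on_slice[OF this, of x] show "smooth_on (fibre x) (\<lambda>w. Fsq (Fs i) x w)" by (simp add: joint_def)
  qed
  then show ?thesis unfolding ddy_eq_idd Q_eq_sum
    by (subst idd_lincomb[OF finite_atLeastAtMost open_fibre]) (use a in auto)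
qed

lemma fund_g_F_weighted_sum: "(x,z) \<in> TM0 \<Longrightarrow> fund_g F j k x z = (\<Sum>i\<in>{..b}. weight i x * fund_g (Fs i) j k x z)"
proof -
  assume a: "(x,z) \<in> TM0"
  have "{..b} = insert 0 {1..b}" by auto
  then have "(\<Sum>i\<in>{..b}. weight i x * fund_g (Fs i) j k x z) = fund_g (Fs 0) j k x z + (\<Sum>i\<in>{1..b}. weight i x * fund_g (Fs i) j k x z)"
    by (simp add: weight_def)
  also have "(\<Sum>i\<in>{1..b}. weight i x * fund_g (Fs i) j k x z) = 1/2 * dy j (dy k Q) x z"
    using ddy_Q_sum[OF a] by (simp add: weight_def fund_g_def sum_distrib_left algebra_simps)
  also have "fund_g (Fs 0) j k x z = 1/2 * dy j (dy k F0sq) x z"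
    by (simp add: fund_g_def F0sq_def[abs_def] Fsq_def[abs_def])
  finally show ?thesis using fund_g_F_split[OF a] by (simp add: algebra_simps)
qed

lemma weight_pos: "(x,z) \<in> TM0 \<Longrightarrow> i \<le> b \<Longrightarrow> weight i x > 0"
proof -
  assume a: "(x,z) \<in> TM0" "i \<le> b"
  show ?thesis
  proof (cases "i = 0")
    case False
    then have i: "i \<in> {1..b}" using a by auto
    have "x \<in> U 0 \<inter> U i" using TM0_base[OF a(1)] a(2) unfolding base_def by auto
    then have "f i x > 0" using twist_funs i unfolding twist_fun_def by auto
    then show ?thesis by (simp add: weight_def)
  qed (simp add: weight_def)
qed

lemma fund_g_Fs_outside_block: "i \<le> b \<Longrightarrow> \<not> (blk j = i \<and> blk k = i) \<Longrightarrow> fund_g (Fs i) j k x z = 0"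
  unfolding fund_g_def ddy_eq_idd using depends_only_on_dd2_eq_0[OF Fsq_Fs_depends_only_on_block] by simp

lemma fund_g_Fs_form:
  assumes "(x,z) \<in> TM0" "i \<le> b"
  shows "(\<Sum>j\<in>UNIV. \<Sum>k\<in>UNIV. fund_g (Fs i) j k x z * w $ j * w $ k) \<ge> 0"
    and "(\<exists>k. blk k = i \<and> w $ k \<noteq> 0) \<Longrightarrow> (\<Sum>j\<in>UNIV. \<Sum>k\<in>UNIV. fund_g (Fs i) j k x z * w $ j * w $ k) > 0"
proof -
  let ?I = "{k. blk k = i}"
  have eq: "(\<Sum>j\<in>UNIV. \<Sum>k\<in>UNIV. fund_g (Fs i) j k x z * w $ j * w $ k) = (\<Sum>j\<in>?I. \<Sum>k\<in>?I. fund_g (Fs i) j k x z * w $ j * w $ k)"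
  proof -
    have "(\<Sum>j\<in>UNIV. \<Sum>k\<in>UNIV. fund_g (Fs i) j k x z * w $ j * w $ k) = (\<Sum>j\<in>UNIV. \<Sum>k\<in>?I. fund_g (Fs i) j k x z * w $ j * w $ k)"
      by (intro sum.cong refl sum.mono_neutral_right) (auto simp: fund_g_Fs_outside_block assms(2))
    also have "\<dots> = (\<Sum>j\<in>?I. \<Sum>k\<in>?I. fund_g (Fs i) j k x z * w $ j * w $ k)"
      by (intro sum.mono_neutral_right) (auto simp: fund_g_Fs_outside_block assms(2))
    finally show ?thesis .
  qed
  have sl: "(x,z) \<in> slit_tb ?I (U i)" using assms unfolding TM0_eq_Inter by auto
  have pd: "(\<exists>k\<in>?I. w $ k \<noteq> 0) \<Longrightarrow> (\<Sum>j\<in>?I. \<Sum>k\<in>?I. fund_g (Fs i) j k x z * w $ j * w $ k) > 0"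
    using factor_chart[OF assms(2)] sl unfolding finsler_chart_def by blast
  show "(\<Sum>j\<in>UNIV. \<Sum>k\<in>UNIV. fund_g (Fs i) j k x z * w $ j * w $ k) \<ge> 0"
  proof (cases "\<exists>k\<in>?I. w $ k \<noteq> 0")
    case True then show ?thesis using pd eq by simp
  next
    case False then show ?thesis unfolding eq by simp
  qed
  show "(\<exists>k. blk k = i \<and> w $ k \<noteq> 0) \<Longrightarrow> (\<Sum>j\<in>UNIV. \<Sum>k\<in>UNIV. fund_g (Fs i) j k x z * w $ j * w $ k) > 0"
    using pd eq by auto
qed

lemma fund_g_F_pos_def:
  assumes "(x,z) \<in> TM0" "w \<noteq> 0"
  shows "(\<Sum>j\<in>UNIV. \<Sum>k\<in>UNIV. fund_g F j k x z * w $ j * w $ k) > 0"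
proof -
  obtain k0 where k0: "w $ k0 \<noteq> 0" using assms(2) by (metis vec_eq_iff zero_index)
  define i0 where "i0 = blk k0"
  have i0: "i0 \<le> b" using blk_le_b i0_def by auto
  have "(\<Sum>j\<in>UNIV. \<Sum>k\<in>UNIV. fund_g F j k x z * w $ j * w $ k)
      = (\<Sum>i\<in>{..b}. weight i x * (\<Sum>j\<in>UNIV. \<Sum>k\<in>UNIV. fund_g (Fs i) j k x z * w $ j * w $ k))"
    by (simp add: fund_g_F_weighted_sum[OF assms(1)] sum_distrib_left sum_distrib_right sum.swap[of _ "{..b}"] algebra_simps)
  also have "\<dots> > 0"
  proof (rule sum_pos2[OF finite_atMost, of i0])
    show "i0 \<in> {..b}" using i0 by auto
    have "0 < (\<Sum>j\<in>UNIV. \<Sum>k\<in>UNIV. fund_g (Fs i0) j k x z * w $ j * w $ k)"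
      using fund_g_Fs_form(2)[OF assms(1) i0, of w] k0 i0_def by auto
    then show "0 < weight i0 x * (\<Sum>j\<in>UNIV. \<Sum>k\<in>UNIV. fund_g (Fs i0) j k x z * w $ j * w $ k)"
      using weight_pos[OF assms(1) i0] by simp
    fix i assume "i \<in> {..b}"
    then have i: "i \<le> b" by simp
    show "0 \<le> weight i x * (\<Sum>j\<in>UNIV. \<Sum>k\<in>UNIV. fund_g (Fs i) j k x z * w $ j * w $ k)"
      using mult_nonneg_nonneg[OF less_imp_le[OF weight_pos[OF assms(1) i]] fund_g_Fs_form(1)[OF assms(1) i]] .
  qed
  finally show ?thesis .
qed

definition "gmat x z = (\<chi> j k. fund_g F j k x z)"

lemma det_gmat_nonzero: "(x,z) \<in> TM0 \<Longrightarrow> det (gmat x z) \<noteq> 0"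
proof
  assume a: "(x,z) \<in> TM0" "det (gmat x z) = 0"
  then have "\<not> invertible (gmat x z)" using invertible_det_nz by blast
  then obtain w where w: "gmat x z *v w = 0" "w \<noteq> 0"
    using matrix_left_invertible_ker invertible_left_inverse by metis
  have "(\<Sum>j\<in>UNIV. \<Sum>k\<in>UNIV. fund_g F j k x z * w $ j * w $ k) = (\<Sum>j\<in>UNIV. w $ j * (gmat x z *v w) $ j)"
    by (simp add: gmat_def matrix_vector_mult_def sum_distrib_left algebra_simps)
  also have "\<dots> = 0" using w by simp
  finally show False using fund_g_F_pos_def[OF a(1) w(2)] by simp
qed

lemma smooth_fund_g_F: "smooth_on (fibre x) (\<lambda>w. fund_g F r s x w)"
proof -
  have "smooth_on TM0 (\<lambda>p. 1/2 * joint (dy r (dy s L)) p)"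
    by (intro smooth_on_cmult smooth_on_joint_dy smooth_L)
  from smooth_on_slice[OF this, of x] show ?thesis by (simp add: joint_def fund_g_def Fsq_F_eq)
qed

lemma fund_ginv_F_cramer: "(x,z) \<in> TM0 \<Longrightarrow> fund_ginv F x z $ i $ l =
   det (\<chi> r s. if s = i then (if r = l then 1 else 0) else gmat x z $r$s) / det (gmat x z)"
  unfolding fund_ginv_def gmat_def[symmetric] by (rule matrix_inv_entry_cramer[OF det_gmat_nonzero])

lemma smooth_fund_ginv_F: "smooth_on (fibre x) (\<lambda>w. fund_ginv F x w $ i $ l)"
proof (rule smooth_on_cong[rule_format, OF _ smooth_on_divide])
  show "\<And>w. w \<in> fibre x \<Longrightarrow> det (\<chi> r s. if s = i then (if r = l then 1 else 0) else gmat x w $r$s) / det (gmat x w) = fund_ginv F x w $ i $ l"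
    using fund_ginv_F_cramer by simp
  show "smooth_on (fibre x) (\<lambda>w. det (\<chi> r s. if s = i then (if r = l then 1 else 0) else gmat x w $r$s))"
  proof (rule smooth_on_det[OF open_fibre], intro allI)
    fix r s
    have "smooth_on (fibre x) (\<lambda>w. if s = i then (if r = l then 1 else 0) else gmat x w $ r $ s)"
    proof (cases "s = i")
      case True
      then show ?thesis using smooth_on_const[OF open_fibre, of x "if r = l then 1 else 0"] by simp
    next
      case False
      then show ?thesis using smooth_fund_g_F[of x r s] by (simp add: gmat_def)
    qed
    then show "smooth_on (fibre x) (\<lambda>w. (\<chi> r s. if s = i then (if r = l then 1 else 0) else gmat x w $r$s) $ r $ s)"
      by simp
  qed
  show "smooth_on (fibre x) (\<lambda>w. det (gmat x w))"
    by (rule smooth_on_det[OF open_fibre]) (auto simp: gmat_def smooth_fund_g_F)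
  show "\<forall>w\<in>fibre x. det (gmat x w) \<noteq> 0" using det_gmat_nonzero by auto
qed

lemma smooth_dx_dy_F0sq: "smooth_on TM0 (joint (dx k (dy l F0sq)))" by (intro smooth_on_joint_dx smooth_on_joint_dy smooth_F0sq)
lemma smooth_dx_dy_Q: "smooth_on TM0 (joint (dx k (dy l Q)))" by (intro smooth_on_joint_dx smooth_on_joint_dy smooth_Q)
lemma smooth_dx_F0sq: "smooth_on TM0 (joint (dx k F0sq))" by (intro smooth_on_joint_dx smooth_F0sq)
lemma smooth_dx_Q: "smooth_on TM0 (joint (dx k Q))" by (intro smooth_on_joint_dx smooth_Q)

lemma dx_dy_L_scale_blocks:
  assumes "(x,z) \<in> TM0" "c > 0"
  shows "dx k (dy l L) x (scale_blocks blk c z) = dx k (dy l F0sq) x z + c * dx k (dy l Q) x z"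
proof -
  have eq: "\<forall>x'\<in>{x'. (x',z) \<in> TM0}. dy l L x' (scale_blocks blk c z) = dy l F0sq x' z + c * dy l Q x' z"
    using dy_L scale_blocks_TM0 dy_F0sq_scale_blocks dy_Q_scale_blocks assms(2) by auto
  have "dx k (dy l L) x (scale_blocks blk c z) = dd (axis k 1) (\<lambda>x'. dy l F0sq x' z + c * dy l Q x' z) x"
    unfolding dx_def by (rule dd_cong[OF open_base_slice _ eq]) (use assms in auto)
  also have "\<dots> = dx k (dy l F0sq) x z + c * dx k (dy l Q) x z"
    using diff_along_x[OF smooth_dy_F0sq assms(1)] diff_along_x[OF smooth_dy_Q assms(1)]
    by (simp add: dd_add dd_cmult diff_along_mult diff_along_const dx_def)
  finally show ?thesis .
qed

lemma dx_L_scale_blocks: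
  assumes "(x,z) \<in> TM0" "c > 0"
  shows "dx l L x (scale_blocks blk c z) = dx l F0sq x z + c\<^sup>2 * dx l Q x z"
proof -
  have eq: "\<forall>x'\<in>{x'. (x',z) \<in> TM0}. L x' (scale_blocks blk c z) = F0sq x' z + c\<^sup>2 * Q x' z"
    using F0sq_scale_blocks Q_scale_blocks TM0_base assms(2) by (auto simp: L_def)
  have "dx l L x (scale_blocks blk c z) = dd (axis l 1) (\<lambda>x'. F0sq x' z + c\<^sup>2 * Q x' z) x"
    unfolding dx_def by (rule dd_cong[OF open_base_slice _ eq]) (use assms in auto)
  also have "\<dots> = dx l F0sq x z + c\<^sup>2 * dx l Q x z"
    using diff_along_x[OF smooth_F0sq assms(1)] diff_along_x[OF smooth_Q assms(1)]
    by (simp add: dd_add dd_cmult diff_along_mult diff_along_const dx_def)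
  finally show ?thesis .
qed

definition "ginv_dxdy_F0sq x i l k z = fund_ginv F x z $ i $ l * dx k (dy l F0sq) x z * z $ k"
definition "ginv_dxdy_Q x i l k z = fund_ginv F x z $ i $ l * dx k (dy l Q) x z * z $ k"
definition "ginv_dx_F0sq x i l z = fund_ginv F x z $ i $ l * dx l F0sq x z"
definition "ginv_dx_Q x i l z = fund_ginv F x z $ i $ l * dx l Q x z"

text \<open>At \<open>S\<^sub>c z\<close> the \<open>x\<close>-derivatives of \<open>F\<^sup>2\<close> split into \<open>F\<^sub>0\<^sup>2\<close>-parts independent of \<open>c\<close> and
  \<open>Q\<close>-parts of weight \<open>c\<close> resp. \<open>c\<^sup>2\<close>, while \<open>g\<^sup>i\<^sup>l\<close> is unchanged; this expresses \<open>G\<^sup>i(x, S\<^sub>c z)\<close>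
  through quantities at \<open>z\<close>.\<close>

definition "spray_summand c x i l z =
  (\<Sum>k\<in>UNIV. block_factor blk c k / 4 * ginv_dxdy_F0sq x i l k z
             + c * block_factor blk c k / 4 * ginv_dxdy_Q x i l k z)
  - (1/4 * ginv_dx_F0sq x i l z + c\<^sup>2 / 4 * ginv_dx_Q x i l z)"

definition "spray_scaled c x i z = (\<Sum>l\<in>UNIV. spray_summand c x i l z)"

lemma gmat_scale_blocks: "(x,z) \<in> TM0 \<Longrightarrow> c > 0 \<Longrightarrow> gmat x (scale_blocks blk c z) = gmat x z"
  by (simp add: gmat_def fund_g_scale_blocks)

lemma spray_coeff_scale_blocks:
  assumes "(x,z) \<in> TM0" "c > 0"
  shows "spray_coeff F i x (scale_blocks blk c z) = spray_scaled c x i z"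
proof -
  have gi: "fund_ginv F x (scale_blocks blk c z) = fund_ginv F x z"
    using gmat_scale_blocks[OF assms] unfolding fund_ginv_def gmat_def by simp
  show ?thesis
    unfolding spray_coeff_def spray_scaled_def spray_summand_def gi Fsq_F_eq dx_dy_L_scale_blocks[OF assms] dx_L_scale_blocks[OF assms] scale_blocks_nth
    by (simp add: ginv_dxdy_F0sq_def ginv_dxdy_Q_def ginv_dx_F0sq_def ginv_dx_Q_def sum_distrib_left sum_distrib_right right_diff_distrib
        sum_subtractf[symmetric] sum.distrib[symmetric] algebra_simps)
qed

lemma smooth_on_fibre: "smooth_on TM0 (joint H) \<Longrightarrow> smooth_on (fibre x) (H x)"
  using smooth_on_slice[of TM0 "joint H" x] by (simp add: joint_def)

lemma smooth_ginv_dxdy_F0sq: "smooth_on (fibre x) (ginv_dxdy_F0sq x i l k)"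
  unfolding ginv_dxdy_F0sq_def[abs_def]
  by (intro smooth_on_mult smooth_fund_ginv_F smooth_on_fibre smooth_dx_dy_F0sq smooth_on_component open_fibre)

lemma smooth_ginv_dxdy_Q: "smooth_on (fibre x) (ginv_dxdy_Q x i l k)"
  unfolding ginv_dxdy_Q_def[abs_def]
  by (intro smooth_on_mult smooth_fund_ginv_F smooth_on_fibre smooth_dx_dy_Q smooth_on_component open_fibre)

lemma smooth_ginv_dx_F0sq: "smooth_on (fibre x) (ginv_dx_F0sq x i l)"
  unfolding ginv_dx_F0sq_def[abs_def]
  by (intro smooth_on_mult smooth_fund_ginv_F smooth_on_fibre smooth_dx_F0sq)

lemma smooth_ginv_dx_Q: "smooth_on (fibre x) (ginv_dx_Q x i l)"
  unfolding ginv_dx_Q_def[abs_def]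
  by (intro smooth_on_mult smooth_fund_ginv_F smooth_on_fibre smooth_dx_Q)

lemma smooth_spray_summand: "smooth_on (fibre x) (spray_summand c x i l)"
  unfolding spray_summand_def[abs_def]
  by (intro smooth_on_diff smooth_on_add smooth_on_sum smooth_on_cmult smooth_ginv_dxdy_F0sq smooth_ginv_dxdy_Q smooth_ginv_dx_F0sq smooth_ginv_dx_Q open_fibre finite_class.finite_UNIV ballI)

lemma smooth_spray_scaled: "smooth_on (fibre x) (spray_scaled c x i)"
  unfolding spray_scaled_def[abs_def]
  by (intro smooth_on_sum smooth_spray_summand open_fibre finite_class.finite_UNIV ballI)

lemma dy_spray_coeff_scale_blocks:
  assumes "(x,w) \<in> TM0" "c > 0"
  shows "dy i (spray_coeff F i) x (scale_blocks blk c w) = (1 / block_factor blk c i) * dd (axis i 1) (spray_scaled c x i) w"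
proof -
  have eq: "\<forall>v\<in>fibre x. spray_scaled c x i v = spray_coeff F i x (scale_blocks blk c v)" using spray_coeff_scale_blocks assms(2) by auto
  have lg: "diff_along (spray_scaled c x i) (axis i 1) w"
    using smooth_on_imp_cont_pdiff_on[OF smooth_spray_scaled] assms(1) unfolding cont_pdiff_on_def by auto
  have l: "diff_along (\<lambda>v. spray_coeff F i x (scale_blocks blk c v)) (axis i 1) w"
    by (rule diff_along_cong[OF open_fibre _ eq lg]) (use assms in auto)
  have "dy i (spray_coeff F i) x (scale_blocks blk c w) = (1 / block_factor blk c i) * dd (axis i 1) (\<lambda>v. spray_coeff F i x (scale_blocks blk c v)) w"
    unfolding dy_def by (rule dd_scale_blocks) (use assms l in auto)
  also have "dd (axis i 1) (\<lambda>v. spray_coeff F i x (scale_blocks blk c v)) w = dd (axis i 1) (spray_scaled c x i) w"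
    by (rule dd_cong[OF open_fibre]) (use assms eq in auto)
  finally show ?thesis .
qed

lemma berwald_curv_scale_blocks:
  assumes "blk j = 0" "(x,y) \<in> TM0" "c > 0"
  shows "berwald_curv F i j j i x (scale_blocks blk c y) = (1 / block_factor blk c i) * idd [axis j 1, axis j 1, axis i 1] (spray_scaled c x i) y"
proof -
  let ?G = "spray_coeff F i"
  have inner: "\<forall>v\<in>fibre x. dy j (dy i ?G) x (scale_blocks blk c v) = dd (axis j 1) (\<lambda>u. (1 / block_factor blk c i) * dd (axis i 1) (spray_scaled c x i) u) v"
  proof
    fix v assume v: "v \<in> fibre x"
    have "dy j (dy i ?G) x (scale_blocks blk c v) = dd (axis j 1) (\<lambda>u. dy i ?G x (scale_blocks blk c u)) v"
      unfolding dy_def[of j] dd_scale_blocks_base[where blk=blk and l=j, OF assms(1)] ..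
    also have "\<dots> = dd (axis j 1) (\<lambda>u. (1 / block_factor blk c i) * dd (axis i 1) (spray_scaled c x i) u) v"
      by (rule dd_cong[OF open_fibre]) (use v dy_spray_coeff_scale_blocks assms(3) in auto)
    finally show "dy j (dy i ?G) x (scale_blocks blk c v) = dd (axis j 1) (\<lambda>u. (1 / block_factor blk c i) * dd (axis i 1) (spray_scaled c x i) u) v" .
  qed
  have "berwald_curv F i j j i x (scale_blocks blk c y) = dd (axis j 1) (\<lambda>v. dy j (dy i ?G) x (scale_blocks blk c v)) y"
    unfolding berwald_curv_def dy_def[of j "dy j (dy i ?G)"] dd_scale_blocks_base[where blk=blk and l=j, OF assms(1)] ..
  also have "\<dots> = dd (axis j 1) (\<lambda>v. dd (axis j 1) (\<lambda>u. (1 / block_factor blk c i) * dd (axis i 1) (spray_scaled c x i) u) v) y"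
    by (rule dd_cong[OF open_fibre]) (use assms inner in auto)
  also have "\<dots> = idd [axis j 1, axis j 1] (\<lambda>u. (1 / block_factor blk c i) * dd (axis i 1) (spray_scaled c x i) u) y" by simp
  also have "\<dots> = (1 / block_factor blk c i) * idd [axis j 1, axis j 1] (dd (axis i 1) (spray_scaled c x i)) y"
    by (rule idd_cmult[OF smooth_on_dd[OF smooth_spray_scaled axis_one_in_Basis]]) (use assms in auto)
  finally show ?thesis by simp
qed

lemma mean_berwald_scale_blocks:
  assumes "blk j = 0" "(x,y) \<in> TM0" "c > 0"
  shows "mean_berwald F j j x (scale_blocks blk c y) = 1/2 * (\<Sum>i\<in>UNIV. (1 / block_factor blk c i) * idd [axis j 1, axis j 1, axis i 1] (spray_scaled c x i) y)"
  unfolding mean_berwald_def using berwald_curv_scale_blocks[OF assms] by simp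

lemma idd_spray_scaled:
  assumes "(x,y) \<in> TM0" "set vs \<subseteq> Basis"
  shows "idd vs (spray_scaled c x i) y = (\<Sum>l\<in>UNIV. (\<Sum>k\<in>UNIV. block_factor blk c k / 4 * idd vs (ginv_dxdy_F0sq x i l k) y + c * block_factor blk c k / 4 * idd vs (ginv_dxdy_Q x i l k) y)
     - (1/4 * idd vs (ginv_dx_F0sq x i l) y + c\<^sup>2 / 4 * idd vs (ginv_dx_Q x i l) y))"
proof -
  have y: "y \<in> fibre x" using assms by simp
  have "idd vs (spray_scaled c x i) y = (\<Sum>l\<in>UNIV. idd vs (spray_summand c x i l) y)"
    unfolding spray_scaled_def[abs_def] by (rule idd_sum[OF finite_class.finite_UNIV open_fibre _ assms(2) y]) (auto intro: smooth_spray_summand)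
  also have "\<dots> = (\<Sum>l\<in>UNIV. (\<Sum>k\<in>UNIV. block_factor blk c k / 4 * idd vs (ginv_dxdy_F0sq x i l k) y + c * block_factor blk c k / 4 * idd vs (ginv_dxdy_Q x i l k) y)
     - (1/4 * idd vs (ginv_dx_F0sq x i l) y + c\<^sup>2 / 4 * idd vs (ginv_dx_Q x i l) y))"
  proof (rule sum.cong[OF refl])
    fix l
    have s1: "smooth_on (fibre x) (\<lambda>z. \<Sum>k\<in>UNIV. block_factor blk c k / 4 * ginv_dxdy_F0sq x i l k z + c * block_factor blk c k / 4 * ginv_dxdy_Q x i l k z)"
      by (intro smooth_on_sum smooth_on_add smooth_on_cmult smooth_ginv_dxdy_F0sq smooth_ginv_dxdy_Q open_fibre finite_class.finite_UNIV ballI)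
    have s2: "smooth_on (fibre x) (\<lambda>z. 1/4 * ginv_dx_F0sq x i l z + c\<^sup>2 / 4 * ginv_dx_Q x i l z)"
      by (intro smooth_on_add smooth_on_cmult smooth_ginv_dx_F0sq smooth_ginv_dx_Q)
    have "idd vs (spray_summand c x i l) y = idd vs (\<lambda>z. \<Sum>k\<in>UNIV. block_factor blk c k / 4 * ginv_dxdy_F0sq x i l k z + c * block_factor blk c k / 4 * ginv_dxdy_Q x i l k z) y
         - idd vs (\<lambda>z. 1/4 * ginv_dx_F0sq x i l z + c\<^sup>2 / 4 * ginv_dx_Q x i l z) y"
      unfolding spray_summand_def[abs_def] by (rule idd_diff[OF s1 s2 assms(2) y])
    also have "idd vs (\<lambda>z. \<Sum>k\<in>UNIV. block_factor blk c k / 4 * ginv_dxdy_F0sq x i l k z + c * block_factor blk c k / 4 * ginv_dxdy_Q x i l k z) y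
       = (\<Sum>k\<in>UNIV. idd vs (\<lambda>z. block_factor blk c k / 4 * ginv_dxdy_F0sq x i l k z + c * block_factor blk c k / 4 * ginv_dxdy_Q x i l k z) y)"
      by (rule idd_sum[OF finite_class.finite_UNIV open_fibre _ assms(2) y])
         (intro ballI smooth_on_add smooth_on_cmult smooth_ginv_dxdy_F0sq smooth_ginv_dxdy_Q)
    also have "\<dots> = (\<Sum>k\<in>UNIV. block_factor blk c k / 4 * idd vs (ginv_dxdy_F0sq x i l k) y + c * block_factor blk c k / 4 * idd vs (ginv_dxdy_Q x i l k) y)"
    proof (rule sum.cong[OF refl])
      fix k
      show "idd vs (\<lambda>z. block_factor blk c k / 4 * ginv_dxdy_F0sq x i l k z + c * block_factor blk c k / 4 * ginv_dxdy_Q x i l k z) y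
          = block_factor blk c k / 4 * idd vs (ginv_dxdy_F0sq x i l k) y + c * block_factor blk c k / 4 * idd vs (ginv_dxdy_Q x i l k) y"
        unfolding idd_add[OF smooth_on_cmult[OF smooth_ginv_dxdy_F0sq] smooth_on_cmult[OF smooth_ginv_dxdy_Q] assms(2) y]
            idd_cmult[OF smooth_ginv_dxdy_F0sq assms(2) y] idd_cmult[OF smooth_ginv_dxdy_Q assms(2) y] ..
    qed
    also have "idd vs (\<lambda>z. 1/4 * ginv_dx_F0sq x i l z + c\<^sup>2 / 4 * ginv_dx_Q x i l z) y = 1/4 * idd vs (ginv_dx_F0sq x i l) y + c\<^sup>2 / 4 * idd vs (ginv_dx_Q x i l) y"
      unfolding idd_add[OF smooth_on_cmult[OF smooth_ginv_dx_F0sq] smooth_on_cmult[OF smooth_ginv_dx_Q] assms(2) y]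
            idd_cmult[OF smooth_ginv_dx_F0sq assms(2) y] idd_cmult[OF smooth_ginv_dx_Q assms(2) y] ..
    finally show "idd vs (spray_summand c x i l) y = (\<Sum>k\<in>UNIV. block_factor blk c k / 4 * idd vs (ginv_dxdy_F0sq x i l k) y + c * block_factor blk c k / 4 * idd vs (ginv_dxdy_Q x i l k) y)
     - (1/4 * idd vs (ginv_dx_F0sq x i l) y + c\<^sup>2 / 4 * idd vs (ginv_dx_Q x i l) y)" .
  qed
  finally show ?thesis .
qed

lemma F_eq_sqrt_L: "F x w = sqrt (L x w)"
  by (simp add: F_def mtp_finsler_def L_def F0sq_def Q_def)

lemma L_scale_blocks: "x \<in> base \<Longrightarrow> c > 0 \<Longrightarrow> L x (scale_blocks blk c y) = F0sq x y + c\<^sup>2 * Q x y"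
  by (simp add: L_def F0sq_scale_blocks Q_scale_blocks)

lemma ylow_scale_blocks:
  assumes "blk j = 0" "(x,y) \<in> TM0" "c > 0"
  shows "ylow F j x (scale_blocks blk c y) = ylow F j x y"
proof -
  have "ylow F j x (scale_blocks blk c y) = (\<Sum>l\<in>UNIV. fund_g F j l x y * (block_factor blk c l * y $ l))"
    unfolding ylow_def scale_blocks_nth using fund_g_scale_blocks[OF assms(2,3)] by simp
  also have "\<dots> = (\<Sum>l\<in>UNIV. fund_g F j l x y * y $ l)"
  proof (rule sum.cong[OF refl])
    fix l show "fund_g F j l x y * (block_factor blk c l * y $ l) = fund_g F j l x y * y $ l"
      using fund_g_F_mixed[OF assms(1) _ assms(2), of l] by (cases "blk l = 0") (auto simp: block_factor_def)
  qed
  finally show ?thesis unfolding ylow_def .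
qed

lemma fund_g_F_diag_pos: "(x,y) \<in> TM0 \<Longrightarrow> fund_g F j j x y > 0"
proof -
  assume a: "(x,y) \<in> TM0"
  have nz: "axis j (1::real) \<noteq> 0" by (simp add: axis_eq_0_iff)
  have e: "(\<Sum>k\<in>UNIV. fund_g F a k x y * axis j 1 $ a * axis j (1::real) $ k) = (if a = j then fund_g F a j x y else 0)" for a
  proof -
    have "(\<Sum>k\<in>UNIV. fund_g F a k x y * axis j 1 $ a * axis j (1::real) $ k) = (\<Sum>k\<in>UNIV. if k = j then (if a = j then fund_g F a k x y else 0) else 0)"
      by (intro sum.cong) (auto simp: axis_def)
    then show ?thesis by simp
  qed
  from fund_g_F_pos_def[OF a nz] show ?thesis unfolding e by simp
qed

lemma F0sq_pos: "(x,y) \<in> TM0 \<Longrightarrow> F0sq x y > 0"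
proof -
  assume a: "(x,y) \<in> TM0"
  have "(x,y) \<in> slit_tb {k. blk k = 0} (U 0)" using a unfolding TM0_eq_Inter by auto
  then have "Fs 0 x y > 0" using factor_chart[of 0] unfolding finsler_chart_def by auto
  then show ?thesis by (simp add: F0sq_def)
qed

lemma Q_pos: "(x,y) \<in> TM0 \<Longrightarrow> Q x y > 0"
proof -
  assume a: "(x,y) \<in> TM0"
  have "(f i x)\<^sup>2 * (Fs i x y)\<^sup>2 > 0" if i: "i \<in> {1..b}" for i
  proof -
    have "(x,y) \<in> slit_tb {k. blk k = i} (U i)" using a i unfolding TM0_eq_Inter by auto
    then have "Fs i x y > 0" using factor_chart[of i] i unfolding finsler_chart_def by auto
    moreover have "weight i x > 0" using weight_pos[OF a] i by auto
    ultimately show ?thesis using i by (simp add: weight_def)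
  qed
  then show ?thesis unfolding Q_def using b_ge_1 by (intro sum_pos) auto
qed

lemma scaled_mean_berwald_poly:
  assumes j: "blk j = 0" and xy: "(x,y) \<in> TM0"
  obtains P :: "real poly"
    where "\<And>c. c > 0 \<Longrightarrow> poly P c = c\<^sup>2 * mean_berwald F j j x (scale_blocks blk c y)"
proof -
  let ?vs = "\<lambda>i. [axis j 1, axis j 1, axis i (1::real)]"
  define d1 where "d1 i l k = idd (?vs i) (ginv_dxdy_F0sq x i l k) y" for i l k
  define d2 where "d2 i l k = idd (?vs i) (ginv_dxdy_Q x i l k) y" for i l k
  define d3 where "d3 i l = idd (?vs i) (ginv_dx_F0sq x i l) y" for i l
  define d4 where "d4 i l = idd (?vs i) (ginv_dx_Q x i l) y" for i l
  define P :: "real poly" where "P = (\<Sum>i\<in>UNIV. \<Sum>l\<in>UNIV.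
      (\<Sum>k\<in>UNIV. monom (d1 i l k / 8) (base_deg blk i + fibre_deg blk k)
                 + monom (d2 i l k / 8) (base_deg blk i + fibre_deg blk k + 1))
      - (monom (d3 i l / 8) (base_deg blk i) + monom (d4 i l / 8) (base_deg blk i + 2)))"
  have "poly P c = c\<^sup>2 * mean_berwald F j j x (scale_blocks blk c y)" if c: "c > 0" for c
  proof -
    have idd_spray: "idd (?vs i) (spray_scaled c x i) y = (\<Sum>l\<in>UNIV.
        (\<Sum>k\<in>UNIV. block_factor blk c k / 4 * d1 i l k + c * block_factor blk c k / 4 * d2 i l k)
        - (1/4 * d3 i l + c\<^sup>2 / 4 * d4 i l))" for i
      unfolding d1_def d2_def d3_def d4_def by (rule idd_spray_scaled[OF xy]) (simp add: axis_one_in_Basis)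
    have "c\<^sup>2 * mean_berwald F j j x (scale_blocks blk c y) = (\<Sum>i\<in>UNIV. \<Sum>l\<in>UNIV.
        (c\<^sup>2 / 2 * (1 / block_factor blk c i)) *
        ((\<Sum>k\<in>UNIV. block_factor blk c k / 4 * d1 i l k + c * block_factor blk c k / 4 * d2 i l k)
         - (1/4 * d3 i l + c\<^sup>2 / 4 * d4 i l)))"
      unfolding mean_berwald_scale_blocks[OF j xy c] idd_spray by (simp add: sum_distrib_left mult.assoc)
    also have "\<dots> = (\<Sum>i\<in>UNIV. \<Sum>l\<in>UNIV.
        (\<Sum>k\<in>UNIV. d1 i l k / 8 * c ^ (base_deg blk i + fibre_deg blk k)
                   + d2 i l k / 8 * c ^ (base_deg blk i + fibre_deg blk k + 1))
        - (d3 i l / 8 * c ^ (base_deg blk i) + d4 i l / 8 * c ^ (base_deg blk i + 2)))"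
      using c by (intro sum.cong refl scaled_terms_monomials) auto
    also have "\<dots> = poly P c"
      unfolding P_def by (simp add: poly_sum poly_monom)
    finally show ?thesis by simp
  qed
  then show ?thesis using that by blast
qed

lemma isotropy_factor_eq_0:
  assumes xy: "(x,y) \<in> TM0"
    and iso: "\<forall>(x,y)\<in>TM0. \<forall>j k. mean_berwald F j k x y
                = 1/2 * (real CARD('n) + 1) * C x / F x y * angular F j k x y"
  shows "C x = 0"
proof -
  obtain j where j: "blk j = 0" using blk_surj by auto
  obtain P where P: "\<And>c. c > 0 \<Longrightarrow> poly P c = c\<^sup>2 * mean_berwald F j j x (scale_blocks blk c y)"
    using scaled_mean_berwald_poly[OF j xy] by blast
  define s where "s = F0sq x y"
  define q where "q = Q x y"
  define \<gamma> where "\<gamma> = fund_g F j j x y"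
  define \<alpha> where "\<alpha> = ylow F j x y"
  define K where "K = 1/2 * (real CARD('n) + 1)"
  have "poly P c = c\<^sup>2 * (K * C x / sqrt (s + c\<^sup>2 * q) * (\<gamma> - \<alpha>\<^sup>2 / (sqrt (s + c\<^sup>2 * q))\<^sup>2))"
    if c: "c > 0" for c
  proof -
    have F_scaled: "F x (scale_blocks blk c y) = sqrt (s + c\<^sup>2 * q)"
      using TM0_base[OF xy] c unfolding F_eq_sqrt_L s_def q_def by (simp add: L_scale_blocks)
    have "mean_berwald F j j x (scale_blocks blk c y)
        = K * C x / F x (scale_blocks blk c y) * angular F j j x (scale_blocks blk c y)"
      using iso scale_blocks_TM0[OF xy c] by (auto simp: K_def)
    also have "angular F j j x (scale_blocks blk c y) = \<gamma> - \<alpha>\<^sup>2 / (sqrt (s + c\<^sup>2 * q))\<^sup>2"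
      unfolding angular_def fund_g_scale_blocks[OF xy c] ylow_scale_blocks[OF j xy c] \<gamma>_def \<alpha>_def
      using F_scaled by (simp add: power2_eq_square)
    finally show ?thesis using P[OF c] F_scaled by simp
  qed
  moreover have "s > 0" using F0sq_pos[OF xy] by (simp add: s_def)
  moreover have "q > 0" using Q_pos[OF xy] by (simp add: q_def)
  moreover have "\<gamma> > 0" using fund_g_F_diag_pos[OF xy] by (simp add: \<gamma>_def)
  moreover have "K > 0" by (simp add: K_def)
  ultimately show ?thesis using poly_eq_inv_sqrt_ratio_imp_zero by blast
qed

end

theorem theorem5p5:
  fixes blk :: "'n::finite \<Rightarrow> nat" and b :: nat
    and U :: "nat \<Rightarrow> (real^'n) set"
    and Fs :: "nat \<Rightarrow> real^'n \<Rightarrow> real^'n \<Rightarrow> real"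
    and f :: "nat \<Rightarrow> real^'n \<Rightarrow> real"
  assumes "b \<ge> 1"
    and "\<forall>k. blk k \<le> b"
    and "\<forall>i\<le>b. \<exists>k. blk k = i"
    and "\<forall>i\<le>b. finsler_chart {k. blk k = i} (U i) (Fs i)"
    and "\<forall>i\<in>{1..b}. twist_fun ({k. blk k = 0} \<union> {k. blk k = i}) (U 0 \<inter> U i) (f i)"
    and "isotropic_mean_berwald (mtp_finsler b Fs f) (mtp_slit blk b U)"
  shows "weakly_berwald (mtp_finsler b Fs f) (mtp_slit blk b U)"
proof -
  interpret twisted_product blk b U Fs f
    using assms(1-5) by unfold_locales
  from assms(6) obtain C where iso: "\<forall>(x,y)\<in>TM0. \<forall>j k. mean_berwald F j k x y
      = 1/2 * (real CARD('n) + 1) * C x / F x y * angular F j k x y"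
    unfolding isotropic_mean_berwald_def TM0_def F_def by blast
  have "C x = 0" if "(x,y) \<in> TM0" for x y
    using isotropy_factor_eq_0[OF that iso] .
  with iso show ?thesis
    unfolding weakly_berwald_def TM0_def F_def by fastforce
qed

end
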